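(* Consider the optimal stopping problem \[ G(p):=\sup_{\tau_O}\mathbb{E}^p\left[\int_0^{\tau_O}e^{-rt}(P(t)-C)\,\mathrm{d}t-e^{-r\tau_O}(l_1P(\tau_O)+l_0)\right],\qquad p>0. \] (i) If $r>\mu$ and $C\le rK_O$, then $\tau_O^*:=+\infty$ a.s. is a maximizer, and $G(p)=\frac{p}{r-\mu}-\frac{C}{r}$. (ii) If $r>\mu$ and $C>rK_O$, then $\tau_O^*:=\inf\{t>0: P(t)\le p_O\}$ is a maximizer, where \[ p_O=e^{-\mu\delta}\frac{\lambda_1}{\lambda_1-1}(r-\mu)\left(\frac{C}{r}-K_O\right), \] and \[ G(p)=\begin{cases} Ap^{\lambda_1}+\dfrac{p}{r-\mu}-\dfrac{C}{r}, & p>p_O,\\[2mm] \dfrac{p}{\mu-r}\left(e^{(\mu-r)\delta}-1\right)+\dfrac{C}{r}\left(e^{-r\delta}-1\right)-e^{-r\delta}K_O, & p\le p_O,\end{cases} \] where $A=e^{(\mu-r)\delta}\,p_O^{1-\lambda_1}/(\lambda_1(\mu-r))$.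
   Context: Let $B$ be a one-dimensional standard Brownian motion on a filtered probability space satisfying the usual conditions (with trivial completed $\mathscr{F}_0$). For constants $\mu\in\mathbb{R}$, $\sigma>0$, $p>0$, the price $P$ solves $\mathrm{d}P(t)=\mu P(t)\,\mathrm{d}t+\sigma P(t)\,\mathrm{d}B(t)$, $P(0)=p$; $\mathbb{E}^p$ is expectation given $P(0)=p$. The supremum is over stopping times valued in $[0,+\infty]$, with $e^{-r\tau}(\cdots)=0$ on $\{\tau=+\infty\}$. Constants: $r>0$, $C,K_I,K_O\in\mathbb{R}$, $\delta\ge0$. With $r>\mu$: $l_1:=-\frac{e^{(\mu-r)\delta}-1}{\mu-r}$, $l_0:=-\frac{C}{r}(e^{-r\delta}-1)+e^{-r\delta}K_O$. $\lambda_1<\lambda_2$ are the two roots of $r-\mu\lambda-\frac12\sigma^2\lambda(\lambda-1)=0$ (when $r>\mu$, $\lambda_1<0$ and $\lambda_2>1$). *)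

theory Defs
  imports "HOL-Probability.Probability"
begin

definition usual_filtration :: "'a measure \<Rightarrow> (real \<Rightarrow> 'a measure) \<Rightarrow> bool" where
  "usual_filtration M F \<longleftrightarrow>
     (\<forall>t. space (F t) = space M \<and> sets (F t) \<subseteq> sets M) \<and>
     (\<forall>s t. 0 \<le> s \<longrightarrow> s \<le> t \<longrightarrow> sets (F s) \<subseteq> sets (F t)) \<and>
     (\<forall>t\<ge>0. \<forall>A. (\<forall>u>t. A \<in> sets (F u)) \<longrightarrow> A \<in> sets (F t)) \<and>
     complete_measure M \<and>
     null_sets M \<subseteq> sets (F 0)"

definition trivial_F0 :: "'a measure \<Rightarrow> (real \<Rightarrow> 'a measure) \<Rightarrow> bool" where
  "trivial_F0 M F \<longleftrightarrow> (\<forall>A \<in> sets (F 0). measure M A = 0 \<or> measure M A = 1)"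

definition std_brownian_motion ::
    "'a measure \<Rightarrow> (real \<Rightarrow> 'a measure) \<Rightarrow> (real \<Rightarrow> 'a \<Rightarrow> real) \<Rightarrow> bool" where
  "std_brownian_motion M F B \<longleftrightarrow>
     (\<forall>t\<ge>0. B t \<in> borel_measurable (F t)) \<and>
     (\<forall>\<omega>\<in>space M. B 0 \<omega> = 0 \<and> continuous_on {0..} (\<lambda>t. B t \<omega>)) \<and>
     (\<forall>s t. 0 \<le> s \<longrightarrow> s < t \<longrightarrow>
        distributed M lborel (\<lambda>\<omega>. B t \<omega> - B s \<omega>) (normal_density 0 (sqrt (t - s))) \<and>
        (\<forall>A \<in> sets (F s). \<forall>U \<in> sets borel.
           measure M (A \<inter> {\<omega> \<in> space M. B t \<omega> - B s \<omega> \<in> U}) =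
           measure M A * measure M {\<omega> \<in> space M. B t \<omega> - B s \<omega> \<in> U}))"

definition is_stopping_time :: "(real \<Rightarrow> 'a measure) \<Rightarrow> ('a \<Rightarrow> ereal) \<Rightarrow> bool" where
  "is_stopping_time F \<tau> \<longleftrightarrow>
     (\<forall>\<omega>. 0 \<le> \<tau> \<omega>) \<and> (\<forall>t\<ge>0. {\<omega> \<in> space (F t). \<tau> \<omega> \<le> ereal t} \<in> sets (F t))"

text \<open>Geometric Brownian motion: the (unique strong) solution of
  dP = mu P dt + sigma P dB, P(0) = p.\<close>
definition gbm :: "real \<Rightarrow> real \<Rightarrow> real \<Rightarrow> (real \<Rightarrow> 'a \<Rightarrow> real) \<Rightarrow> real \<Rightarrow> 'a \<Rightarrow> real" where
  "gbm p \<mu> \<sigma> B t \<omega> = p * exp ((\<mu> - \<sigma>\<^sup>2 / 2) * t + \<sigma> * B t \<omega>)"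

definition stop_reward ::
    "'a measure \<Rightarrow> real \<Rightarrow> real \<Rightarrow> real \<Rightarrow> real \<Rightarrow> (real \<Rightarrow> 'a \<Rightarrow> real) \<Rightarrow> ('a \<Rightarrow> ereal) \<Rightarrow> real" where
  "stop_reward M r C l1 l0 P \<tau> =
     (\<integral>\<omega>. (LINT t:{t. 0 \<le> t \<and> ereal t < \<tau> \<omega>}|lborel. exp (- r * t) * (P t \<omega> - C))
          - (if \<tau> \<omega> = \<infinity> then 0
             else exp (- r * real_of_ereal (\<tau> \<omega>)) * (l1 * P (real_of_ereal (\<tau> \<omega>)) \<omega> + l0)) \<partial>M)"

definition value_G ::
    "'a measure \<Rightarrow> (real \<Rightarrow> 'a measure) \<Rightarrow> real \<Rightarrow> real \<Rightarrow> real \<Rightarrow> real \<Rightarrow> (real \<Rightarrow> 'a \<Rightarrow> real) \<Rightarrow> real" where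
  "value_G M F r C l1 l0 P = (SUP \<tau> \<in> {\<tau>. is_stopping_time F \<tau>}. stop_reward M r C l1 l0 P \<tau>)"

end

(*
  Write c1 = 1/(r - mu) + l1 = exp((mu - r) delta)/(r - mu) > 0 and c0 = C/r - l0.  Splitting the
  running reward at tau, Fubini's theorem and the martingale property of exp(-(r - mu) t) P(t) give,
  for every stopping time tau,

      reward(tau) = p/(r - mu) - C/r + E[exp(-r tau) (c0 - c1 P(tau)); tau < infinity].

  For a root lam of r - mu lam - sigma^2 lam (lam - 1)/2 = 0 the process exp(-r t) (P(t)/q) powr lam
  is a multiple of an exponential martingale of B, and optional stopping (for bounded times by
  dyadic approximation and a second moment bound, in general by Fatou's lemma) shows that its
  expectation at tau is at most its initial value.  Hence every majorant
  c0 - c1 x <= A1 (x/q) powr lam1 + A2 (x/q) powr lam2 with A1, A2 >= 0 bounds the reward.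
  If c0 <= 0 the zero majorant shows that never stopping is optimal.  Otherwise the tangent lines
  of the convex functions x powr lam at x = p_O and at x = p give majorants that are attained by the
  first passage of P below p_O: there P(tau) = p_O, and as the martingale for lam1 < 0 stays
  bounded before tau, optional stopping holds with equality, E[exp(-r tau)] = (p/p_O) powr lam1.
*)
theory Submission
  imports Defs
begin

lemma Bernoulli_inequality_powr:
  fixes u l :: real
  assumes u: "u > 0" and l: "l \<le> 0 \<or> 1 \<le> l"
  shows "1 + l * (u - 1) \<le> u powr l"
proof (cases "l \<le> 0")
  case True
  have "l * (u - 1) \<le> l * ln u"
    using ln_le_minus_one[OF u] True by (simp add: mult_left_mono_neg)
  also have "1 + l * ln u \<le> exp (l * ln u)" by (rule exp_ge_add_one_self)
  finally show ?thesis using u by (simp add: powr_def)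
next
  case False
  with l have l1: "1 \<le> l" by simp
  have "(u powr l) powr (1 / l) * 1 powr (1 - 1 / l) \<le> (1 / l) * (u powr l) + (1 - 1 / l) * 1"
    by (rule Youngs_inequality_0) (use l1 u in auto)
  then have "u \<le> (u powr l) / l + (1 - 1 / l)" using l1 u by (simp add: powr_powr)
  then have "l * u \<le> l * ((u powr l) / l + (1 - 1 / l))" using l1 by (simp add: mult_left_mono)
  then show ?thesis using l1 by (simp add: algebra_simps)
qed

lemma characteristic_roots_sign:
  fixes \<mu> \<sigma> r l1 l2 :: real
  assumes "\<sigma> > 0" and "r > 0" and "r > \<mu>"
    and q1: "r - \<mu> * l1 - 1/2 * \<sigma>\<^sup>2 * l1 * (l1 - 1) = 0"
    and q2: "r - \<mu> * l2 - 1/2 * \<sigma>\<^sup>2 * l2 * (l2 - 1) = 0"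
    and "l1 < l2"
  shows "l1 < 0" and "1 < l2"
proof -
  let ?s = "\<sigma>\<^sup>2 / 2"
  have s: "?s > 0" using assms by simp
  \<comment> \<open>Vieta: \<open>l1 l2 = -r/s\<close> and \<open>(l1 - 1)(l2 - 1) = -(r - \<mu>)/s\<close>, both negative\<close>
  have "(l1 - l2) * (\<mu> + ?s * (l1 + l2 - 1)) = 0"
    using q1 q2 by (simp add: algebra_simps power2_eq_square) (simp add: field_simps)
  then have mu: "\<mu> = - ?s * (l1 + l2 - 1)" using \<open>l1 < l2\<close> by simp
  have rr: "r = - ?s * (l1 * l2)"
    using q1 unfolding mu by (simp add: algebra_simps power2_eq_square) (simp add: field_simps)
  have "r - \<mu> = - ?s * ((l1 - 1) * (l2 - 1))" unfolding rr mu by (simp add: field_simps)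
  then have "0 < - ?s * ((l1 - 1) * (l2 - 1))" using \<open>r > \<mu>\<close> by simp
  then have "(l1 - 1) * (l2 - 1) < 0" using s by (simp add: mult_less_0_iff zero_less_mult_iff)
  moreover have "0 < - ?s * (l1 * l2)" using rr \<open>r > 0\<close> by simp
  then have "l1 * l2 < 0" using s by (simp add: mult_less_0_iff zero_less_mult_iff)
  ultimately show "l1 < 0" and "1 < l2" using \<open>l1 < l2\<close> by (auto simp: mult_less_0_iff)
qed

text \<open>Smooth fit: for this \<open>q\<close> the line \<open>c0 - c1 * X\<close> is tangent at \<open>X = q\<close> to the convex function
  \<open>(c0 - c1 * q) * (X / q) powr l\<close>.\<close>
lemma linear_le_powr_at_threshold:
  fixes c0 c1 l q :: real
  assumes c1: "c1 > 0" and c0: "c0 > 0" and l: "l < 0" and q: "q = l / (l - 1) * (c0 / c1)"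
  shows "q > 0" and "c0 - c1 * q > 0" and "l * (c0 - c1 * q) = - c1 * q"
    and "X > 0 \<Longrightarrow> c0 - c1 * X \<le> (c0 - c1 * q) * (X / q) powr l"
proof -
  have "l / (l - 1) > 0" using l by (simp add: zero_less_divide_iff)
  then show q0: "q > 0" unfolding q using c0 c1 by (intro mult_pos_pos) auto
  have "q * (l - 1) = l * (c0 / c1)" using q l c1 by (simp add: field_simps)
  then show lin: "l * (c0 - c1 * q) = - c1 * q" using c1 by (simp add: field_simps)
  then have "l * (c0 - c1 * q) < 0" using c1 q0 by simp
  then show pos: "c0 - c1 * q > 0" using l by (simp add: mult_less_0_iff)
  assume X: "X > 0"
  have "c0 - c1 * X = (c0 - c1 * q) + (- c1 * q) * (X / q - 1)"
    using q0 by (simp add: field_simps)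
  also have "\<dots> = (c0 - c1 * q) + (l * (c0 - c1 * q)) * (X / q - 1)" by (simp only: lin)
  also have "\<dots> = (c0 - c1 * q) * (1 + l * (X / q - 1))"
    by (simp add: algebra_simps del: times_divide_eq_right)
  also have "\<dots> \<le> (c0 - c1 * q) * (X / q) powr l"
    using pos Bernoulli_inequality_powr[of "X / q" l] X q0 l by (intro mult_left_mono) auto
  finally show "c0 - c1 * X \<le> (c0 - c1 * q) * (X / q) powr l" .
qed

lemma powr_majorant_below_threshold:
  fixes c0 c1 l1 l2 p q :: real
  assumes c1: "c1 > 0" and c0: "c0 > 0" and l1: "l1 < 0" and l2: "l2 > 1" and p: "p > 0"
    and q: "q = l1 / (l1 - 1) * (c0 / c1)" and pq: "p \<le> q"
  obtains A1 A2 where "A1 \<ge> 0" and "A2 \<ge> 0" and "A1 + A2 = c0 - c1 * p"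
    and "\<And>X. X > 0 \<Longrightarrow> c0 - c1 * X \<le> A1 * (X / p) powr l1 + A2 * (X / p) powr l2"
proof
  define A1 where "A1 = (l2 * (c0 - c1 * p) + c1 * p) / (l2 - l1)"
  define A2 where "A2 = (- c1 * p - l1 * (c0 - c1 * p)) / (l2 - l1)"
  have d: "l2 - l1 > 0" using l1 l2 by simp
  have q1: "c1 * q * (1 - l1) = - l1 * c0" using q l1 c1 by (simp add: field_simps)
  have le: "c1 * p * (1 - l1) \<le> c1 * q * (1 - l1)"
    using pq c1 l1 by (intro mult_right_mono mult_left_mono) auto
  also have "\<dots> < c0 * (1 - l1)" using q1 c0 by (simp add: algebra_simps)
  finally have "c1 * p < c0" using l1 by simp
  then have "0 \<le> l2 * (c0 - c1 * p) + c1 * p" using l2 c1 p by simp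
  then show A1: "A1 \<ge> 0" unfolding A1_def using d by simp
  have "0 \<le> - c1 * p - l1 * (c0 - c1 * p)" using q1 le by (simp add: algebra_simps)
  then show A2: "A2 \<ge> 0" unfolding A2_def using d by simp
  have "A1 + A2 = (c0 - c1 * p) * (l2 - l1) / (l2 - l1)"
    unfolding A1_def A2_def add_divide_distrib[symmetric] by (simp add: algebra_simps)
  then show sum: "A1 + A2 = c0 - c1 * p" using d by simp
  have "l1 * A1 + l2 * A2 = (- c1 * p) * (l2 - l1) / (l2 - l1)"
    unfolding A1_def A2_def times_divide_eq_right add_divide_distrib[symmetric]
    by (simp add: algebra_simps)
  then have lin: "l1 * A1 + l2 * A2 = - c1 * p" using d by simp
  fix X :: real assume X: "X > 0"
  \<comment> \<open>\<open>A1, A2\<close> are chosen so that the line \<open>c0 - c1 X\<close> is the sum of the tangents at \<open>X = p\<close>\<close>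
  have "c0 - c1 * X = (A1 + A2) + (l1 * A1 + l2 * A2) * (X / p - 1)"
    unfolding sum lin using p by (simp add: field_simps)
  also have "\<dots> = A1 * (1 + l1 * (X / p - 1)) + A2 * (1 + l2 * (X / p - 1))"
    by (simp add: algebra_simps)
  also have "\<dots> \<le> A1 * (X / p) powr l1 + A2 * (X / p) powr l2"
    using A1 A2 X p l1 l2 Bernoulli_inequality_powr[of "X / p" l1] Bernoulli_inequality_powr[of "X / p" l2]
    by (intro add_mono mult_left_mono) auto
  finally show "c0 - c1 * X \<le> A1 * (X / p) powr l1 + A2 * (X / p) powr l2" .
qed

lemma ennreal_add_eq_ennreal_imp:
  fixes a :: ennreal and b c :: real
  assumes "a + ennreal b = ennreal c" "0 \<le> b" "0 \<le> c"
  shows "a = ennreal (c - b)" and "b \<le> c"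
proof -
  have "a \<noteq> \<infinity>" using assms(1) by auto
  then obtain x where x: "a = ennreal x" "0 \<le> x" by (cases a) auto
  then have "x + b = c" using assms ennreal_inj[of "x + b" c] by (simp add: ennreal_plus)
  then show "a = ennreal (c - b)" and "b \<le> c" using x by auto
qed

lemma nn_integral_exp_neg_atLeast:
  fixes k x :: real
  assumes k: "k > 0"
  shows "(\<integral>\<^sup>+s. indicator {x..} s * ennreal (exp (- k * s)) \<partial>lborel) = ennreal (exp (- k * x) / k)"
proof -
  have "(\<integral>\<^sup>+s. indicator {x..} s * ennreal (exp (- k * s)) \<partial>lborel)
      = ennreal (1 / k) * (\<integral>\<^sup>+u. indicator {x..} (x + 1 / k * u) * ennreal (exp (- k * (x + 1 / k * u))) \<partial>lborel)"
    using nn_integral_real_affine[of "\<lambda>s. indicator {x..} s * ennreal (exp (- k * s))" "1 / k" x] k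
    by simp
  also have "(\<integral>\<^sup>+u. indicator {x..} (x + 1 / k * u) * ennreal (exp (- k * (x + 1 / k * u))) \<partial>lborel)
      = (\<integral>\<^sup>+u. ennreal (exp (- k * x)) * (ennreal (u ^ 0 * exp (- u)) * indicator {0..} u) \<partial>lborel)"
    using k by (intro nn_integral_cong)
      (auto simp: indicator_def ennreal_mult[symmetric] exp_add[symmetric] field_simps)
  also have "\<dots> = ennreal (exp (- k * x))
      * (\<integral>\<^sup>+u. ennreal (u ^ 0 * exp (- u)) * indicator {0..} u \<partial>lborel)"
    by (rule nn_integral_cmult) simp
  also have "\<dots> = ennreal (exp (- k * x))"
    unfolding nn_intergal_power_times_exp_Ici by simp
  finally show ?thesis using k by (simp add: ennreal_mult[symmetric] mult.commute)
qed

lemma nn_integral_exp_neg_before: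
  fixes r :: real and t :: ereal
  assumes r: "r > 0" and t: "t \<ge> 0"
  shows "(\<integral>\<^sup>+s. ennreal (indicator {s. 0 \<le> s \<and> ereal s < t} s * exp (- r * s)) \<partial>lborel)
       = ennreal ((1 - (if t = \<infinity> then 0 else exp (- r * real_of_ereal t))) / r)"
proof -
  let ?A = "{s. 0 \<le> s \<and> ereal s < t}" and ?B = "{s. 0 \<le> s \<and> t \<le> ereal s}"
  have tail: "(\<integral>\<^sup>+s. ennreal (indicator ?B s * exp (- r * s)) \<partial>lborel)
      = ennreal ((if t = \<infinity> then 0 else exp (- r * real_of_ereal t)) / r)"
  proof (cases "t = \<infinity>")
    case False
    then obtain x where x: "t = ereal x" "x \<ge> 0" using t by (cases t) auto
    have "(\<integral>\<^sup>+s. ennreal (indicator ?B s * exp (- r * s)) \<partial>lborel)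
        = (\<integral>\<^sup>+s. indicator {x..} s * ennreal (exp (- r * s)) \<partial>lborel)"
      using x by (intro nn_integral_cong) (auto simp: indicator_def)
    then show ?thesis using x nn_integral_exp_neg_atLeast[OF r] by simp
  qed (simp add: indicator_def)
  have "(\<integral>\<^sup>+s. ennreal (indicator ?A s * exp (- r * s)) \<partial>lborel)
      + (\<integral>\<^sup>+s. ennreal (indicator ?B s * exp (- r * s)) \<partial>lborel)
      = (\<integral>\<^sup>+s. indicator {0..} s * ennreal (exp (- r * s)) \<partial>lborel)"
    by (subst nn_integral_add[symmetric]) (auto intro!: nn_integral_cong simp: indicator_def not_less)
  also have "\<dots> = ennreal (1 / r)" using nn_integral_exp_neg_atLeast[OF r, of 0] by simp
  finally show ?thesis
    using ennreal_add_eq_ennreal_imp(1) r unfolding tail by (simp add: diff_divide_distrib)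
qed

lemma set_integral_discounted_before:
  fixes f :: "real \<Rightarrow> real" and t :: ereal
  assumes r: "r > 0" and t: "0 \<le> t"
    and fm: "(\<lambda>s. f (max 0 s)) \<in> borel_measurable lborel" and f: "\<And>s. 0 \<le> f s"
    and fin: "(\<integral>\<^sup>+s. ennreal (indicator {s. 0 \<le> s \<and> ereal s < t} s * (exp (- r * s) * f s)) \<partial>lborel) \<noteq> \<infinity>"
  shows "(LINT s:{s. 0 \<le> s \<and> ereal s < t}|lborel. exp (- r * s) * (f s - C))
    = enn2real (\<integral>\<^sup>+s. ennreal (indicator {s. 0 \<le> s \<and> ereal s < t} s * (exp (- r * s) * f s)) \<partial>lborel)
      - C * ((1 - (if t = \<infinity> then 0 else exp (- r * real_of_ereal t))) / r)"
proof -
  let ?S = "{s. 0 \<le> s \<and> ereal s < t}"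
  define f1 where "f1 s = indicator ?S s * (exp (- r * s) * f s)" for s
  define f2 where "f2 s = indicator ?S s * exp (- r * s)" for s :: real
  have "f1 = (\<lambda>s. indicator ?S s * (exp (- r * s) * f (max 0 s)))"
    by (auto simp: fun_eq_iff f1_def indicator_def)
  then have f1m: "f1 \<in> borel_measurable lborel" using fm by simp
  have f2m: "f2 \<in> borel_measurable lborel" unfolding f2_def by measurable
  have f1nn: "0 \<le> f1 s" and f2nn: "0 \<le> f2 s" for s using f by (simp_all add: f1_def f2_def)
  have i1: "integrable lborel f1"
    using fin f1nn by (intro integrableI_nonneg[OF f1m]) (auto simp: f1_def top.not_eq_extremum)
  have I1: "integral\<^sup>L lborel f1 = enn2real (\<integral>\<^sup>+s. ennreal (f1 s) \<partial>lborel)"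
    by (rule integral_eq_nn_integral[OF f1m]) (use f1nn in simp)
  have K: "(\<integral>\<^sup>+s. ennreal (f2 s) \<partial>lborel) = ennreal ((1 - (if t = \<infinity> then 0 else exp (- r * real_of_ereal t))) / r)"
    unfolding f2_def by (rule nn_integral_exp_neg_before[OF r t])
  have i2: "integrable lborel f2"
    using K f2nn by (intro integrableI_nonneg[OF f2m]) auto
  have "0 \<le> (1 - (if t = \<infinity> then 0 else exp (- r * real_of_ereal t))) / r"
    using r real_of_ereal_pos[OF t] by (auto simp: field_simps)
  then have I2: "integral\<^sup>L lborel f2 = (1 - (if t = \<infinity> then 0 else exp (- r * real_of_ereal t))) / r"
    using integral_eq_nn_integral[OF f2m] f2nn K by simp
  have "(LINT s:?S|lborel. exp (- r * s) * (f s - C)) = integral\<^sup>L lborel (\<lambda>s. f1 s - C * f2 s)"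
    unfolding set_lebesgue_integral_def
    by (intro Bochner_Integration.integral_cong) (auto simp: f1_def f2_def indicator_def algebra_simps)
  also have "\<dots> = integral\<^sup>L lborel f1 - C * integral\<^sup>L lborel f2"
    using i1 i2 by simp
  finally show ?thesis unfolding I1 I2 f1_def .
qed

lemma nn_integral_split_at:
  fixes f :: "real \<Rightarrow> real" and t :: ereal
  assumes [measurable]: "(\<lambda>s. f (max 0 s)) \<in> borel_measurable lborel" and f: "\<And>s. 0 \<le> f s"
  shows "(\<integral>\<^sup>+s. ennreal (indicator {s. 0 \<le> s \<and> ereal s < t} s * f s) \<partial>lborel)
      + (\<integral>\<^sup>+s. ennreal (indicator {s. 0 \<le> s \<and> t \<le> ereal s} s * f s) \<partial>lborel)
    = (\<integral>\<^sup>+s. ennreal (indicator {s. 0 \<le> s \<and> 0 \<le> ereal s} s * f s) \<partial>lborel)"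
proof -
  have max0: "(\<integral>\<^sup>+s. ennreal (indicator {s. 0 \<le> s \<and> S s} s * f s) \<partial>lborel)
      = (\<integral>\<^sup>+s. ennreal (indicator {s. 0 \<le> s \<and> S s} s * f (max 0 s)) \<partial>lborel)" for S
    by (auto intro!: nn_integral_cong simp: indicator_def)
  show ?thesis
    unfolding max0 using f by (subst nn_integral_add[symmetric])
      (auto intro!: nn_integral_cong simp: indicator_def not_less)
qed

lemma nn_integral_discrete_optional_stopping:
  fixes Y :: "nat \<Rightarrow> 'a \<Rightarrow> real" and \<sigma> :: "'a \<Rightarrow> nat"
  assumes [measurable]: "\<And>k. Y k \<in> borel_measurable M" "\<sigma> \<in> measurable M (count_space UNIV)"
    and step: "\<And>k. (\<integral>\<^sup>+\<omega>. ennreal (indicator {\<omega>\<in>space M. k < \<sigma> \<omega>} \<omega> * Y (Suc k) \<omega>) \<partial>M)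
                 = (\<integral>\<^sup>+\<omega>. ennreal (indicator {\<omega>\<in>space M. k < \<sigma> \<omega>} \<omega> * Y k \<omega>) \<partial>M)"
  shows "(\<integral>\<^sup>+\<omega>. ennreal (Y (min (\<sigma> \<omega>) j) \<omega>) \<partial>M) = (\<integral>\<^sup>+\<omega>. ennreal (Y 0 \<omega>) \<partial>M)"
proof (induction j)
  case (Suc j)
  let ?S = "{\<omega>\<in>space M. j < \<sigma> \<omega>}" and ?N = "{\<omega>\<in>space M. \<not> j < \<sigma> \<omega>}"
  have [measurable]: "(\<lambda>\<omega>. Y (min (\<sigma> \<omega>) j) \<omega>) \<in> borel_measurable M"
    by (rule measurable_compose_countable[where f="\<lambda>i \<omega>. Y (min i j) \<omega>"]) auto
  have split: "ennreal (Y (min (\<sigma> \<omega>) i) \<omega>) =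
      ennreal (indicator ?N \<omega> * Y (min (\<sigma> \<omega>) j) \<omega>) + ennreal (indicator ?S \<omega> * Y i \<omega>)"
    if "\<omega> \<in> space M" "i = j \<or> i = Suc j" for \<omega> i
    using that by (cases "\<sigma> \<omega> \<le> j"; cases "\<sigma> \<omega> = Suc j") (auto simp: indicator_def min_def)
  have "(\<integral>\<^sup>+\<omega>. ennreal (Y (min (\<sigma> \<omega>) i) \<omega>) \<partial>M) =
      (\<integral>\<^sup>+\<omega>. ennreal (indicator ?N \<omega> * Y (min (\<sigma> \<omega>) j) \<omega>) \<partial>M)
      + (\<integral>\<^sup>+\<omega>. ennreal (indicator ?S \<omega> * Y i \<omega>) \<partial>M)" if "i = j \<or> i = Suc j" for i
    using that by (subst nn_integral_cong[OF split], simp_all, subst nn_integral_add) auto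
  from this[of j] this[of "Suc j"] show ?case using Suc by (simp add: step)
qed simp

lemma le_min_add_square_div:
  fixes y z c K :: real
  assumes "0 \<le> y" "y\<^sup>2 \<le> c * z" "K > 0"
  shows "y \<le> min y K + c / K * z"
proof (cases "y \<le> K")
  case True
  have "0 \<le> y\<^sup>2 / K" using assms by simp
  also have "\<dots> \<le> c / K * z" using assms by (simp add: divide_right_mono)
  finally show ?thesis using True by simp
next
  case False
  then have "y * K \<le> y * y" using assms by (intro mult_left_mono) auto
  then have "y \<le> y\<^sup>2 / K" using assms by (simp add: le_divide_eq power2_eq_square)
  also have "\<dots> \<le> c / K * z" using assms by (simp add: divide_right_mono)
  finally show ?thesis using False assms by simp
qed

context prob_space
begin

lemma integral_min_ge_of_square_bound:
  fixes Y Z :: "'a \<Rightarrow> real" and c K :: real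
  assumes Y: "integrable M Y" "integral\<^sup>L M Y = 1" "\<And>\<omega>. 0 \<le> Y \<omega>"
    and Z: "integrable M Z" "integral\<^sup>L M Z = 1"
    and sq: "\<And>\<omega>. \<omega> \<in> space M \<Longrightarrow> (Y \<omega>)\<^sup>2 \<le> c * Z \<omega>" and K: "K > 0"
  shows "1 - c / K \<le> integral\<^sup>L M (\<lambda>\<omega>. min (Y \<omega>) K)"
proof -
  have imin: "integrable M (\<lambda>\<omega>. min (Y \<omega>) K)"
    by (rule integrable_const_bound[where B=K]) (use Y K in auto)
  have "1 \<le> integral\<^sup>L M (\<lambda>\<omega>. min (Y \<omega>) K + c / K * Z \<omega>)"
    unfolding Y(2)[symmetric] using Y Z imin sq K
    by (intro integral_mono le_min_add_square_div) auto
  also have "\<dots> = integral\<^sup>L M (\<lambda>\<omega>. min (Y \<omega>) K) + c / K"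
    using imin Z by simp
  finally show ?thesis by simp
qed

text \<open>The second-moment bound makes the sequence uniformly integrable, so no mass escapes in
  the limit.\<close>
lemma nn_integral_limit_eq_1:
  fixes Yn Zn :: "nat \<Rightarrow> 'a \<Rightarrow> real" and Y :: "'a \<Rightarrow> real" and c :: real
  assumes [measurable]: "\<And>n. Yn n \<in> borel_measurable M" "\<And>n. Zn n \<in> borel_measurable M"
      "Y \<in> borel_measurable M"
    and Yn: "\<And>n \<omega>. 0 \<le> Yn n \<omega>" "\<And>n. (\<integral>\<^sup>+\<omega>. ennreal (Yn n \<omega>) \<partial>M) = 1"
    and Zn: "\<And>n \<omega>. 0 \<le> Zn n \<omega>" "\<And>n. (\<integral>\<^sup>+\<omega>. ennreal (Zn n \<omega>) \<partial>M) = 1"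
    and sq: "\<And>n \<omega>. \<omega> \<in> space M \<Longrightarrow> (Yn n \<omega>)\<^sup>2 \<le> c * Zn n \<omega>"
    and lim: "\<And>\<omega>. \<omega> \<in> space M \<Longrightarrow> (\<lambda>n. Yn n \<omega>) \<longlonglongrightarrow> Y \<omega>"
  shows "(\<integral>\<^sup>+\<omega>. ennreal (Y \<omega>) \<partial>M) = 1"
proof -
  have Y0: "\<And>\<omega>. \<omega> \<in> space M \<Longrightarrow> 0 \<le> Y \<omega>"
    using lim by (rule LIMSEQ_le_const) (use Yn in auto)
  have "(\<integral>\<^sup>+\<omega>. ennreal (Y \<omega>) \<partial>M) = (\<integral>\<^sup>+\<omega>. liminf (\<lambda>n. ennreal (Yn n \<omega>)) \<partial>M)"
    using lim by (intro nn_integral_cong lim_imp_Liminf[symmetric] tendsto_ennrealI) auto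
  also have "\<dots> \<le> liminf (\<lambda>n. \<integral>\<^sup>+\<omega>. ennreal (Yn n \<omega>) \<partial>M)"
    by (rule nn_integral_liminf) simp
  finally have le1: "(\<integral>\<^sup>+\<omega>. ennreal (Y \<omega>) \<partial>M) \<le> 1" by (simp add: Yn Liminf_const)
  have intY: "integrable M Y"
    using le1 Y0 by (intro integrableI_nonneg) (auto simp: AE_I2 le_less_trans)
  have intYn: "integrable M (Yn n) \<and> integral\<^sup>L M (Yn n) = 1" for n
    using nn_integral_eq_integrable[where f="Yn n" and x=1 and M=M] Yn by auto
  have intZn: "integrable M (Zn n) \<and> integral\<^sup>L M (Zn n) = 1" for n
    using nn_integral_eq_integrable[where f="Zn n" and x=1 and M=M] Zn by auto
  have "1 - c / real (Suc m) \<le> integral\<^sup>L M Y" for m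
  proof -
    have K: "real (Suc m) > 0" by simp
    have "(\<lambda>n. integral\<^sup>L M (\<lambda>\<omega>. min (Yn n \<omega>) (Suc m))) \<longlonglongrightarrow> integral\<^sup>L M (\<lambda>\<omega>. min (Y \<omega>) (Suc m))"
      by (rule integral_dominated_convergence[where w="\<lambda>_. Suc m"])
        (use lim Yn in \<open>auto intro!: tendsto_min\<close>)
    then have "1 - c / real (Suc m) \<le> integral\<^sup>L M (\<lambda>\<omega>. min (Y \<omega>) (Suc m))"
      using integral_min_ge_of_square_bound[OF _ _ Yn(1) _ _ sq K] intYn intZn
      by (intro LIMSEQ_le_const) auto
    also have "\<dots> \<le> integral\<^sup>L M Y"
      using intY Y0 by (intro integral_mono) (auto intro!: integrable_const_bound[where B="Suc m"])
    finally show ?thesis .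
  qed
  moreover have "(\<lambda>m. 1 - c / real m) \<longlonglongrightarrow> 1 - 0"
    by (intro tendsto_diff tendsto_const lim_const_over_n)
  then have "(\<lambda>m. 1 - c / real (Suc m)) \<longlonglongrightarrow> 1"
    using LIMSEQ_Suc by fastforce
  ultimately have "1 \<le> integral\<^sup>L M Y" by (intro LIMSEQ_le_const2) auto
  moreover have eq: "ennreal (integral\<^sup>L M Y) = (\<integral>\<^sup>+\<omega>. ennreal (Y \<omega>) \<partial>M)"
    using intY Y0 by (intro nn_integral_eq_integral[symmetric]) auto
  ultimately have "integral\<^sup>L M Y = 1" using le1 by (metis ennreal_le_1 order_antisym)
  then show ?thesis using eq by simp
qed

end

lemma borel_measurable_continuous_process:
  fixes X :: "real \<Rightarrow> 'a \<Rightarrow> real"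
  assumes meas: "\<And>t. 0 \<le> t \<Longrightarrow> X t \<in> borel_measurable M"
    and cont: "\<And>\<omega>. \<omega> \<in> space M \<Longrightarrow> continuous_on {0..} (\<lambda>t. X t \<omega>)"
  shows "(\<lambda>x. X (max 0 (snd x)) (fst x)) \<in> borel_measurable (M \<Otimes>\<^sub>M lborel)"
proof -
  define u where "u n x = X (max 0 (real_of_int \<lceil>2^n * max 0 (snd x)\<rceil> / 2^n)) (fst x)"
    for n :: nat and x :: "'a \<times> real"
  have um: "u n \<in> borel_measurable (M \<Otimes>\<^sub>M lborel)" for n
    unfolding u_def
  proof (rule measurable_compose_countable[where f="\<lambda>i x. X (max 0 (real_of_int i / 2^n)) (fst x)"])
    show "(\<lambda>x. \<lceil>(2::real)^n * max 0 (snd x)\<rceil>) \<in> measurable (M \<Otimes>\<^sub>M lborel) (count_space UNIV)"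
      by (rule measurable_compose[OF _ measurable_real_ceiling]) measurable
  qed (rule measurable_compose[OF measurable_fst meas], simp)
  show ?thesis
  proof (rule borel_measurable_LIMSEQ_real[OF _ um])
    fix x :: "'a \<times> real" assume "x \<in> space (M \<Otimes>\<^sub>M lborel)"
    then have \<omega>: "fst x \<in> space M" by (auto simp: space_pair_measure)
    define s where "s = max 0 (snd x)"
    have s0: "s \<ge> 0" by (simp add: s_def)
    have b: "s \<le> real_of_int \<lceil>2^n * s\<rceil> / 2^n \<and> real_of_int \<lceil>2^n * s\<rceil> / 2^n \<le> s + 1 / 2^n"
      for n :: nat
      using ceiling_correct[of "2^n * s"] by (simp add: field_simps)
    have lim: "(\<lambda>n. s + 1 / (2::real)^n) \<longlonglongrightarrow> s + 0"
      by (intro tendsto_add tendsto_const) (simp add: LIMSEQ_inverse_realpow_zero divide_inverse)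
    have "(\<lambda>n. real_of_int \<lceil>2^n * s\<rceil> / 2^n) \<longlonglongrightarrow> s"
    proof (rule tendsto_sandwich[where f="\<lambda>n. s" and h="\<lambda>n. s + 1 / 2^n"])
      show "(\<lambda>n. s + 1 / 2^n) \<longlonglongrightarrow> s" using lim by simp
    qed (use b in \<open>auto intro: always_eventually\<close>)
    then have "(\<lambda>n. X (real_of_int \<lceil>2^n * s\<rceil> / 2^n) (fst x)) \<longlonglongrightarrow> X s (fst x)"
      by (rule continuous_on_tendsto_compose[OF cont[OF \<omega>]])
        (use b s0 in \<open>auto intro!: always_eventually intro: order_trans\<close>)
    moreover have "max 0 (real_of_int \<lceil>2^n * s\<rceil> / 2^n) = real_of_int \<lceil>2^n * s\<rceil> / 2^n" for n :: nat
      using b[of n] s0 by auto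
    ultimately show "(\<lambda>n. u n x) \<longlonglongrightarrow> X (max 0 (snd x)) (fst x)"
      by (simp add: u_def s_def)
  qed
qed

definition stopped_value :: "(real \<Rightarrow> 'a \<Rightarrow> real) \<Rightarrow> ('a \<Rightarrow> ereal) \<Rightarrow> 'a \<Rightarrow> real" where
  "stopped_value X \<tau> \<omega> = (if \<tau> \<omega> = \<infinity> then 0 else X (real_of_ereal (\<tau> \<omega>)) \<omega>)"

lemma borel_measurable_at_random_time:
  assumes [measurable]: "\<tau> \<in> borel_measurable M"
      "(\<lambda>x. X (max 0 (snd x)) (fst x)) \<in> borel_measurable (M \<Otimes>\<^sub>M lborel)"
    and "\<And>\<omega>. 0 \<le> \<tau> \<omega>"
  shows "(\<lambda>\<omega>. X (real_of_ereal (\<tau> \<omega>)) \<omega>) \<in> borel_measurable M"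
proof -
  have "(\<lambda>\<omega>. (\<omega>, real_of_ereal (\<tau> \<omega>))) \<in> measurable M (M \<Otimes>\<^sub>M lborel)" by measurable
  from measurable_compose[OF this assms(2)]
  have "(\<lambda>\<omega>. X (max 0 (real_of_ereal (\<tau> \<omega>))) \<omega>) \<in> borel_measurable M" by simp
  moreover have "max 0 (real_of_ereal (\<tau> \<omega>)) = real_of_ereal (\<tau> \<omega>)" for \<omega>
    using real_of_ereal_pos[OF assms(3)] by simp
  ultimately show ?thesis by simp
qed

lemma borel_measurable_stopped_value:
  assumes "\<tau> \<in> borel_measurable M"
      "(\<lambda>x. X (max 0 (snd x)) (fst x)) \<in> borel_measurable (M \<Otimes>\<^sub>M lborel)"
    and "\<And>\<omega>. 0 \<le> \<tau> \<omega>"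
  shows "stopped_value X \<tau> \<in> borel_measurable M"
  unfolding stopped_value_def[abs_def]
  using borel_measurable_at_random_time[OF assms] assms(1) by measurable

definition time_min :: "('a \<Rightarrow> ereal) \<Rightarrow> real \<Rightarrow> 'a \<Rightarrow> real" where
  "time_min \<tau> t \<omega> = (if \<tau> \<omega> \<le> ereal t then real_of_ereal (\<tau> \<omega>) else t)"

definition dyadic_index :: "real \<Rightarrow> nat \<Rightarrow> ('a \<Rightarrow> ereal) \<Rightarrow> 'a \<Rightarrow> nat" where
  "dyadic_index t n \<tau> \<omega> =
     (if \<tau> \<omega> = \<infinity> then 2^n else min (2^n) (nat \<lceil>2^n * real_of_ereal (\<tau> \<omega>) / t\<rceil>))"

lemma time_min_nonneg: "0 \<le> t \<Longrightarrow> 0 \<le> \<tau> \<omega> \<Longrightarrow> 0 \<le> time_min \<tau> t \<omega>"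
  by (simp add: time_min_def real_of_ereal_pos)

lemma time_min_le: "0 \<le> \<tau> \<omega> \<Longrightarrow> ereal (time_min \<tau> t \<omega>) \<le> \<tau> \<omega>"
  by (cases "\<tau> \<omega>") (auto simp: time_min_def)

lemma measurable_dyadic_index[measurable]:
  assumes [measurable]: "\<tau> \<in> borel_measurable M"
  shows "dyadic_index t n \<tau> \<in> measurable M (count_space UNIV)"
  unfolding dyadic_index_def by measurable

lemma dyadic_index_le: "dyadic_index t n \<tau> \<omega> \<le> 2^n"
  by (simp add: dyadic_index_def)

lemma min_dyadic_ceiling_bounds:
  fixes t x :: real and n :: nat
  assumes t: "t > 0" and x: "x \<ge> 0"
  defines "T \<equiv> t * real (min (2^n) (nat \<lceil>2^n * x / t\<rceil>)) / 2^n"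
  shows "min x t \<le> T" and "T \<le> min x t + t / 2^n" and "T \<le> t"
proof -
  define c where "c = \<lceil>2^n * x / t\<rceil>"
  have "0 \<le> 2^n * x / t" using t x by simp
  then have c0: "c \<ge> 0" by (simp add: c_def)
  have cy: "2^n * x / t \<le> of_int c" "of_int c < 2^n * x / t + 1"
    using ceiling_correct[of "2^n * x / t"] by (auto simp: c_def)
  define u where "u = t * of_int c / 2^n"
  have "x \<le> u" "u < x + t / 2^n"
    using cy t by (simp_all add: u_def field_simps)
  moreover have "T = min t u"
    using c0 t unfolding T_def c_def[symmetric] u_def by (simp add: min_def field_simps)
  ultimately show "min x t \<le> T" and "T \<le> min x t + t / 2^n" and "T \<le> t"
    using t by (auto simp: min_def)
qed

lemma dyadic_index_bounds:
  assumes \<tau>: "0 \<le> \<tau> \<omega>" and t: "t > 0"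
  shows "time_min \<tau> t \<omega> \<le> t * real (dyadic_index t n \<tau> \<omega>) / 2^n"
    and "t * real (dyadic_index t n \<tau> \<omega>) / 2^n \<le> time_min \<tau> t \<omega> + t / 2^n"
    and "t * real (dyadic_index t n \<tau> \<omega>) / 2^n \<le> t"
    and "0 \<le> time_min \<tau> t \<omega>"
proof -
  have "time_min \<tau> t \<omega> \<le> t * real (dyadic_index t n \<tau> \<omega>) / 2^n
    \<and> t * real (dyadic_index t n \<tau> \<omega>) / 2^n \<le> time_min \<tau> t \<omega> + t / 2^n
    \<and> t * real (dyadic_index t n \<tau> \<omega>) / 2^n \<le> t \<and> 0 \<le> time_min \<tau> t \<omega>"
  proof (cases "\<tau> \<omega>")
    case (real x)
    then have "time_min \<tau> t \<omega> = min x t"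
      "dyadic_index t n \<tau> \<omega> = min (2^n) (nat \<lceil>2^n * x / t\<rceil>)" "0 \<le> x"
      using \<tau> by (auto simp: time_min_def dyadic_index_def min_def)
    then show ?thesis using min_dyadic_ceiling_bounds[OF t \<open>0 \<le> x\<close>, of n] t by auto
  qed (use t \<tau> in \<open>auto simp: dyadic_index_def time_min_def\<close>)
  then show "time_min \<tau> t \<omega> \<le> t * real (dyadic_index t n \<tau> \<omega>) / 2^n"
    and "t * real (dyadic_index t n \<tau> \<omega>) / 2^n \<le> time_min \<tau> t \<omega> + t / 2^n"
    and "t * real (dyadic_index t n \<tau> \<omega>) / 2^n \<le> t"
    and "0 \<le> time_min \<tau> t \<omega>" by auto
qed

lemma less_dyadic_index_iff:
  assumes \<tau>: "0 \<le> \<tau> \<omega>" and t: "t > 0" and k: "k < 2^n"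
  shows "k < dyadic_index t n \<tau> \<omega> \<longleftrightarrow> \<not> \<tau> \<omega> \<le> ereal (t * real k / 2^n)"
proof (cases "\<tau> \<omega>")
  case (real x)
  have "k < dyadic_index t n \<tau> \<omega> \<longleftrightarrow> int k < \<lceil>2^n * x / t\<rceil>"
    using real k by (auto simp: dyadic_index_def)
  also have "\<dots> \<longleftrightarrow> t * real k / 2^n < x"
    using t by (simp add: less_ceiling_iff field_simps)
  finally show ?thesis using real by auto
qed (use \<tau> k in \<open>auto simp: dyadic_index_def\<close>)

definition first_passage_below :: "(real \<Rightarrow> real) \<Rightarrow> real \<Rightarrow> ereal" where
  "first_passage_below f c = Inf {ereal t | t. t > 0 \<and> f t \<le> c}"

lemma first_passage_below_nonneg: "0 \<le> first_passage_below f c"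
  unfolding first_passage_below_def by (rule Inf_greatest) auto

lemma first_passage_below_le: "t > 0 \<Longrightarrow> f t \<le> c \<Longrightarrow> first_passage_below f c \<le> ereal t"
  unfolding first_passage_below_def by (rule Inf_lower) auto

lemma first_passage_below_less_iff:
  "first_passage_below f c < ereal u \<longleftrightarrow> (\<exists>t. 0 < t \<and> t < u \<and> f t \<le> c)"
proof
  assume "first_passage_below f c < ereal u"
  then show "\<exists>t. 0 < t \<and> t < u \<and> f t \<le> c"
    unfolding first_passage_below_def by (auto simp: Inf_less_iff)
qed (auto dest!: first_passage_below_le[of _ f c] intro: le_less_trans)

lemma above_before_first_passage:
  assumes "c \<le> f 0" "0 \<le> s" "ereal s < first_passage_below f c"
  shows "c \<le> f s"
  using assms first_passage_below_le[of s f c] by (cases "s = 0") force+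

lemma at_first_passage:
  assumes cont: "continuous_on {0..} f" and c: "c \<le> f 0"
    and x: "first_passage_below f c = ereal x"
  shows "f x = c"
proof -
  have x0: "0 \<le> x" using first_passage_below_nonneg[of f c] x by simp
  have near: "\<exists>d>0. \<forall>s\<ge>0. \<bar>s - x\<bar> < d \<longrightarrow> \<bar>f s - f x\<bar> < e" if "e > 0" for e
  proof -
    have "\<forall>e>0. \<exists>d>0. \<forall>s\<in>{0..}. dist s x < d \<longrightarrow> dist (f s) (f x) < e"
      using cont x0 unfolding continuous_on_iff by simp
    from this[rule_format, OF that] obtain d
      where "d > 0" "\<forall>s\<in>{0..}. dist s x < d \<longrightarrow> dist (f s) (f x) < e" by blast
    then show ?thesis by (auto simp: dist_real_def)
  qed
  have "f x \<le> c"
  proof (rule ccontr)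
    assume "\<not> f x \<le> c"
    then obtain d where d: "d > 0" "\<And>s. s \<ge> 0 \<Longrightarrow> \<bar>s - x\<bar> < d \<Longrightarrow> \<bar>f s - f x\<bar> < f x - c"
      using near[of "f x - c"] by auto
    have "first_passage_below f c < ereal (x + d)" using x d(1) by simp
    then obtain t where t: "0 < t" "t < x + d" "f t \<le> c"
      by (auto simp: first_passage_below_less_iff)
    have "x \<le> t" using first_passage_below_le[of t f c] t x by simp
    with d(2)[of t] t show False by simp
  qed
  moreover have "c \<le> f x"
  proof (rule ccontr)
    assume "\<not> c \<le> f x"
    moreover have "x \<noteq> 0" using calculation c by auto
    ultimately obtain d where d: "d > 0" "\<And>s. s \<ge> 0 \<Longrightarrow> \<bar>s - x\<bar> < d \<Longrightarrow> \<bar>f s - f x\<bar> < c - f x"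
      using near[of "c - f x"] by auto
    define s where "s = max (x / 2) (x - d / 2)"
    have s: "0 < s" "s < x" "\<bar>s - x\<bar> < d" using x0 \<open>x \<noteq> 0\<close> d(1) by (auto simp: s_def)
    then have "f s \<le> c" using d(2)[of s] by simp
    with s show False using first_passage_below_le[of s f c] x by simp
  qed
  ultimately show ?thesis by simp
qed

lemma first_passage_below_eq_0:
  assumes cont: "continuous_on {0..} f" and c: "f 0 < c"
  shows "first_passage_below f c = 0"
proof -
  obtain d where d: "d > 0" "\<And>s. s \<ge> 0 \<Longrightarrow> \<bar>s\<bar> < d \<Longrightarrow> \<bar>f s - f 0\<bar> < c - f 0"
    using cont c unfolding continuous_on_iff dist_real_def by (metis atLeast_iff diff_0_right diff_gt_0_iff_gt order_refl)
  have "first_passage_below f c \<le> 0 + ereal e" if "e > 0" for e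
  proof -
    define s where "s = min e d / 2"
    have s: "0 < s" "s < d" "s \<le> e" using that d(1) by (auto simp: s_def)
    then have "first_passage_below f c \<le> ereal s" using d(2)[of s] by (intro first_passage_below_le) auto
    then show ?thesis using s by (simp add: order_trans)
  qed
  then have "first_passage_below f c \<le> 0" by (rule ereal_le_epsilon2)
  then show ?thesis using first_passage_below_nonneg[of f c] by simp
qed

lemma exists_le_on_interval_iff_rational:
  fixes f :: "real \<Rightarrow> real"
  assumes cont: "continuous_on {a..b} f" and ab: "a < b"
  shows "(\<exists>s\<in>{a..b}. f s \<le> c) \<longleftrightarrow> (\<forall>m::nat. \<exists>q\<in>\<rat> \<inter> {a..b}. f q < c + 1 / (real m + 1))"
proof
  assume "\<exists>s\<in>{a..b}. f s \<le> c"
  then obtain s where s: "s \<in> {a..b}" "f s \<le> c" by auto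
  show "\<forall>m::nat. \<exists>q\<in>\<rat> \<inter> {a..b}. f q < c + 1 / (real m + 1)"
  proof
    fix m :: nat
    obtain d where d: "d > 0" "\<And>x. x \<in> {a..b} \<Longrightarrow> \<bar>x - s\<bar> < d \<Longrightarrow> \<bar>f x - f s\<bar> < 1 / (real m + 1)"
      using cont s(1) unfolding continuous_on_iff dist_real_def
      by (metis of_nat_0_le_iff zero_less_divide_1_iff add_nonneg_pos zero_less_one)
    have "max a (s - d) < min b (s + d)" using ab s d(1) by auto
    then obtain q where "q \<in> \<rat>" "max a (s - d) < q" "q < min b (s + d)"
      using Rats_dense_in_real by blast
    moreover from this have "\<bar>f q - f s\<bar> < 1 / (real m + 1)" using d(2)[of q] by auto
    ultimately show "\<exists>q\<in>\<rat> \<inter> {a..b}. f q < c + 1 / (real m + 1)"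
      using s(2) by (intro bexI[of _ q]) auto
  qed
next
  assume approx: "\<forall>m::nat. \<exists>q\<in>\<rat> \<inter> {a..b}. f q < c + 1 / (real m + 1)"
  obtain s0 where s0: "s0 \<in> {a..b}" "\<And>y. y \<in> {a..b} \<Longrightarrow> f s0 \<le> f y"
    using continuous_attains_inf[OF compact_Icc _ cont] ab by auto
  have "f s0 \<le> c"
  proof (rule ccontr)
    assume "\<not> f s0 \<le> c"
    then obtain m :: nat where m: "1 / (real m + 1) < f s0 - c"
      using reals_Archimedean[of "f s0 - c"] by (auto simp: inverse_eq_divide add.commute)
    from approx obtain q where "q \<in> {a..b}" "f q < c + 1 / (real m + 1)" by blast
    with s0(2)[of q] m show False by simp
  qed
  then show "\<exists>s\<in>{a..b}. f s \<le> c" using s0(1) by blast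
qed

section \<open>Brownian motion and its exponential martingales\<close>

lemma normal_density_mult_exp:
  assumes "s > 0"
  shows "normal_density 0 s x * exp (a * x) = exp (a^2 * s^2 / 2) * normal_density (a * s^2) s x"
proof -
  have "- (x^2) / (2 * s^2) + a * x = - ((x - a * s^2)^2) / (2 * s^2) + a^2 * s^2 / 2"
    using assms by (simp add: field_simps power2_eq_square)
  then show ?thesis
    unfolding normal_density_def by (simp add: exp_add[symmetric] mult_ac)
qed

locale brownian_filtration = prob_space M for M :: "'a measure" +
  fixes F :: "real \<Rightarrow> 'a measure" and B :: "real \<Rightarrow> 'a \<Rightarrow> real"
  assumes usual: "usual_filtration M F" and brownian: "std_brownian_motion M F B"
begin

lemma space_F: "space (F t) = space M"
  using usual unfolding usual_filtration_def by auto

lemma sets_F: "sets (F t) \<subseteq> sets M"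
  using usual unfolding usual_filtration_def by auto

lemma subalgebra_F: "subalgebra M (F t)"
  using space_F sets_F unfolding subalgebra_def by auto

lemma sets_F_mono: "0 \<le> s \<Longrightarrow> s \<le> t \<Longrightarrow> sets (F s) \<subseteq> sets (F t)"
  using usual unfolding usual_filtration_def by auto

lemma sets_F_right_continuous:
  "0 \<le> t \<Longrightarrow> (\<And>u. u > t \<Longrightarrow> A \<in> sets (F u)) \<Longrightarrow> A \<in> sets (F t)"
  using usual unfolding usual_filtration_def by auto

lemma B_adapted: "0 \<le> t \<Longrightarrow> B t \<in> borel_measurable (F t)"
  using brownian unfolding std_brownian_motion_def by auto

lemma borel_measurable_F: "X \<in> borel_measurable (F t) \<Longrightarrow> X \<in> borel_measurable M"
  using measurable_from_subalg[OF subalgebra_F] by blast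

lemma borel_measurable_B[measurable]: "0 \<le> t \<Longrightarrow> B t \<in> borel_measurable M"
  using B_adapted borel_measurable_F by blast

lemma B_0: "\<omega> \<in> space M \<Longrightarrow> B 0 \<omega> = 0"
  using brownian unfolding std_brownian_motion_def by auto

lemma continuous_B: "\<omega> \<in> space M \<Longrightarrow> continuous_on {0..} (\<lambda>t. B t \<omega>)"
  using brownian unfolding std_brownian_motion_def by auto

lemma distributed_increment: "0 \<le> s \<Longrightarrow> s < t \<Longrightarrow>
    distributed M lborel (\<lambda>\<omega>. B t \<omega> - B s \<omega>) (normal_density 0 (sqrt (t - s)))"
  using brownian unfolding std_brownian_motion_def by auto

lemma prob_inter_increment: "0 \<le> s \<Longrightarrow> s < t \<Longrightarrow> A \<in> sets (F s) \<Longrightarrow> U \<in> sets borel \<Longrightarrow>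
    prob (A \<inter> {\<omega> \<in> space M. B t \<omega> - B s \<omega> \<in> U}) =
    prob A * prob {\<omega> \<in> space M. B t \<omega> - B s \<omega> \<in> U}"
  using brownian unfolding std_brownian_motion_def by auto

lemma indep_var_increment:
  assumes s: "0 \<le> s" "s < t" and X: "X \<in> borel_measurable (F s)"
  shows "indep_var borel X borel (\<lambda>\<omega>. B t \<omega> - B s \<omega>)"
proof -
  let ?D = "\<lambda>\<omega>. B t \<omega> - B s \<omega>"
  have XM: "X \<in> borel_measurable M" using X by (rule borel_measurable_F)
  have DM: "?D \<in> borel_measurable M" using s by (intro borel_measurable_diff borel_measurable_B) auto
  have vimage_sets: "sigma_sets (space M) {f -` A \<inter> space M |A. A \<in> sets borel}
       = {f -` A \<inter> space M |A. A \<in> sets (borel :: real measure)}" if "f \<in> borel_measurable M" for f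
    using sigma_sets_vimage_commute[of f "space M" UNIV "sets borel"] sets.sigma_sets_eq[of "borel :: real measure"]
    by simp
  have XS: "{X -` A \<inter> space M |A. A \<in> sets borel} \<subseteq> sets (F s)"
    using measurable_sets[OF X] space_F by auto
  show ?thesis
    unfolding indep_var_eq indep_sets2_eq vimage_sets[OF XM] vimage_sets[OF DM]
  proof (intro conjI ballI)
    show "{X -` A \<inter> space M |A. A \<in> sets borel} \<subseteq> events" using XS sets_F by blast
    fix a b assume a: "a \<in> {X -` A \<inter> space M |A. A \<in> sets borel}"
      and b: "b \<in> {?D -` A \<inter> space M |A. A \<in> sets borel}"
    then obtain U where U: "U \<in> sets borel" "b = {\<omega> \<in> space M. B t \<omega> - B s \<omega> \<in> U}" by auto
    then show "prob (a \<inter> b) = prob a * prob b"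
      using prob_inter_increment[OF s, of a U] a XS by auto
  qed (use XM DM in auto)
qed

lemma nn_integral_mult_increment:
  assumes s: "0 \<le> s" "s < t" and X: "X \<in> borel_measurable (F s)" "\<And>\<omega>. 0 \<le> X \<omega>"
    and g: "g \<in> borel_measurable borel" "\<And>x. 0 \<le> g x"
  shows "(\<integral>\<^sup>+\<omega>. ennreal (X \<omega> * g (B t \<omega> - B s \<omega>)) \<partial>M)
       = (\<integral>\<^sup>+\<omega>. ennreal (X \<omega>) \<partial>M) * (\<integral>\<^sup>+\<omega>. ennreal (g (B t \<omega> - B s \<omega>)) \<partial>M)"
proof -
  let ?X = "\<lambda>\<omega>. ennreal (X \<omega>)" and ?G = "\<lambda>\<omega>. ennreal (g (B t \<omega> - B s \<omega>))"
  have "indep_var borel (ennreal \<circ> X) borel ((\<lambda>x. ennreal (g x)) \<circ> (\<lambda>\<omega>. B t \<omega> - B s \<omega>))"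
    by (rule indep_var_compose[OF indep_var_increment[OF s X(1)]]) (use g in auto)
  then have ind: "indep_var borel ?X borel ?G" by (simp add: comp_def)
  have bb: "(\<lambda>_. borel) = case_bool borel borel" by (rule ext) (simp split: bool.split)
  have "indep_vars (\<lambda>_. borel) (case_bool ?X ?G) UNIV"
    using ind unfolding indep_var_def bb .
  from indep_vars_nn_integral[OF _ this]
  have "(\<integral>\<^sup>+\<omega>. (\<Prod>i\<in>UNIV. case_bool ?X ?G i \<omega>) \<partial>M) = (\<Prod>i\<in>UNIV. \<integral>\<^sup>+\<omega>. case_bool ?X ?G i \<omega> \<partial>M)"
    by (auto split: bool.split)
  then show ?thesis using X(2) g(2) by (simp add: UNIV_bool mult.commute ennreal_mult)
qed

lemma nn_integral_exp_increment:
  assumes "0 \<le> s" "s < t"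
  shows "(\<integral>\<^sup>+\<omega>. ennreal (exp (a * (B t \<omega> - B s \<omega>))) \<partial>M) = ennreal (exp (a^2 * (t - s) / 2))"
proof -
  let ?sd = "sqrt (t - s)"
  have sd: "?sd > 0" using assms by simp
  have "(\<integral>\<^sup>+\<omega>. ennreal (exp (a * (B t \<omega> - B s \<omega>))) \<partial>M) =
     (\<integral>\<^sup>+x. ennreal (normal_density 0 ?sd x) * ennreal (exp (a * x)) \<partial>lborel)"
    by (rule distributed_nn_integral[OF distributed_increment[OF assms], symmetric]) simp
  also have "\<dots> = (\<integral>\<^sup>+x. ennreal (exp (a^2 * ?sd^2 / 2)) * ennreal (normal_density (a * ?sd^2) ?sd x) \<partial>lborel)"
    by (intro nn_integral_cong) (simp add: normal_density_mult_exp[OF sd] ennreal_mult[symmetric])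
  also have "\<dots> = ennreal (exp (a^2 * ?sd^2 / 2)) * (\<integral>\<^sup>+x. ennreal (normal_density (a * ?sd^2) ?sd x) \<partial>lborel)"
    by (simp add: nn_integral_cmult)
  also have "(\<integral>\<^sup>+x. ennreal (normal_density (a * ?sd^2) ?sd x) \<partial>lborel) = 1"
    using sd by (subst nn_integral_eq_integral) (auto simp del: real_sqrt_gt_0_iff)
  finally show ?thesis using assms by simp
qed

definition exp_mart :: "real \<Rightarrow> real \<Rightarrow> 'a \<Rightarrow> real" where
  "exp_mart a t \<omega> = exp (a * B t \<omega> - a^2 * t / 2)"

lemma exp_mart_pos: "exp_mart a t \<omega> > 0"
  by (simp add: exp_mart_def)

lemma exp_mart_adapted: "0 \<le> t \<Longrightarrow> exp_mart a t \<in> borel_measurable (F t)"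
  unfolding exp_mart_def using B_adapted[of t] by measurable

lemma borel_measurable_exp_mart: "0 \<le> t \<Longrightarrow> exp_mart a t \<in> borel_measurable M"
  using exp_mart_adapted borel_measurable_F by blast

lemma continuous_exp_mart: "\<omega> \<in> space M \<Longrightarrow> continuous_on {0..} (\<lambda>t. exp_mart a t \<omega>)"
  unfolding exp_mart_def using continuous_B by (intro continuous_intros) auto

lemma exp_mart_0: "\<omega> \<in> space M \<Longrightarrow> exp_mart a 0 \<omega> = 1"
  by (simp add: exp_mart_def B_0)

lemma exp_mart_square: "(exp_mart a t \<omega>)\<^sup>2 = exp (a^2 * t) * exp_mart (2 * a) t \<omega>"
  by (simp add: exp_mart_def power2_eq_square exp_add[symmetric] field_simps)

lemma nn_integral_exp_mart_indicator:
  assumes st: "0 \<le> s" "s \<le> t" and A: "A \<in> sets (F s)"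
  shows "(\<integral>\<^sup>+\<omega>. ennreal (indicator A \<omega> * exp_mart a t \<omega>) \<partial>M)
       = (\<integral>\<^sup>+\<omega>. ennreal (indicator A \<omega> * exp_mart a s \<omega>) \<partial>M)"
proof (cases "s = t")
  case False
  with st have st': "s < t" by simp
  let ?X = "\<lambda>\<omega>. indicator A \<omega> * exp_mart a s \<omega>"
  let ?c = "exp (- (a^2 * (t - s) / 2))"
  have Xm: "?X \<in> borel_measurable (F s)"
    using exp_mart_adapted[OF st(1)] A by measurable
  have eq: "\<And>\<omega>. indicator A \<omega> * exp_mart a t \<omega> = (?X \<omega> * exp (a * (B t \<omega> - B s \<omega>))) * ?c"
    by (simp add: exp_mart_def exp_add[symmetric] exp_diff[symmetric] field_simps)
  have "(\<integral>\<^sup>+\<omega>. ennreal (indicator A \<omega> * exp_mart a t \<omega>) \<partial>M)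
      = (\<integral>\<^sup>+\<omega>. ennreal (?X \<omega> * exp (a * (B t \<omega> - B s \<omega>))) * ennreal ?c \<partial>M)"
    by (simp add: eq ennreal_mult'')
  also have "\<dots> = (\<integral>\<^sup>+\<omega>. ennreal (?X \<omega> * exp (a * (B t \<omega> - B s \<omega>))) \<partial>M) * ennreal ?c"
    by (rule nn_integral_multc) (use st st' borel_measurable_F[OF Xm] in auto)
  also have "(\<integral>\<^sup>+\<omega>. ennreal (?X \<omega> * exp (a * (B t \<omega> - B s \<omega>))) \<partial>M)
     = (\<integral>\<^sup>+\<omega>. ennreal (?X \<omega>) \<partial>M) * ennreal (exp (a^2 * (t - s) / 2))"
    unfolding nn_integral_exp_increment[OF st(1) st', symmetric]
    by (rule nn_integral_mult_increment[OF st(1) st' Xm]) (auto simp: exp_mart_def)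
  finally show ?thesis
    by (simp add: mult.assoc ennreal_mult''[symmetric] exp_add[symmetric])
qed simp

lemma nn_integral_exp_mart:
  assumes "0 \<le> t"
  shows "(\<integral>\<^sup>+\<omega>. ennreal (exp_mart a t \<omega>) \<partial>M) = 1"
proof -
  have "(\<integral>\<^sup>+\<omega>. ennreal (exp_mart a t \<omega>) \<partial>M)
      = (\<integral>\<^sup>+\<omega>. ennreal (indicator (space M) \<omega> * exp_mart a t \<omega>) \<partial>M)"
    by (intro nn_integral_cong) simp
  also have "\<dots> = (\<integral>\<^sup>+\<omega>. ennreal (indicator (space M) \<omega> * exp_mart a 0 \<omega>) \<partial>M)"
    using sets.top[of "F 0"] assms by (intro nn_integral_exp_mart_indicator) (auto simp: space_F)
  also have "\<dots> = (\<integral>\<^sup>+\<omega>. 1 \<partial>M)"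
    by (intro nn_integral_cong) (simp add: exp_mart_0)
  finally show ?thesis by (simp add: emeasure_space_1)
qed

lemma stopping_time_nonneg: "is_stopping_time F \<tau> \<Longrightarrow> 0 \<le> \<tau> \<omega>"
  unfolding is_stopping_time_def by auto

lemma stopping_time_le_sets:
  "is_stopping_time F \<tau> \<Longrightarrow> 0 \<le> t \<Longrightarrow> {\<omega>\<in>space M. \<tau> \<omega> \<le> ereal t} \<in> sets (F t)"
  unfolding is_stopping_time_def using space_F by metis

lemma borel_measurable_stopping_time:
  assumes st: "is_stopping_time F \<tau>"
  shows "\<tau> \<in> borel_measurable M"
proof (rule borel_measurableI_le)
  fix y :: ereal
  show "{\<omega>\<in>space M. \<tau> \<omega> \<le> y} \<in> sets M"
  proof (cases "y < 0")
    case True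
    have "\<not> \<tau> \<omega> \<le> y" for \<omega> using stopping_time_nonneg[OF st, of \<omega>] True by (meson leD order_trans)
    then show ?thesis by simp
  next
    case False
    then show ?thesis
    proof (cases y)
      case (real r)
      then show ?thesis using False stopping_time_le_sets[OF st, of r] sets_F by auto
    qed auto
  qed
qed

lemma stopping_time_const: "0 \<le> c \<Longrightarrow> is_stopping_time F (\<lambda>_. c)"
  unfolding is_stopping_time_def using sets.top by auto

lemma borel_measurable_exp_mart_joint:
  "(\<lambda>x. exp_mart a (max 0 (snd x)) (fst x)) \<in> borel_measurable (M \<Otimes>\<^sub>M lborel)"
  by (rule borel_measurable_continuous_process[OF borel_measurable_exp_mart continuous_exp_mart])

lemma borel_measurable_exp_mart_at_stopping_time:
  "is_stopping_time F \<tau> \<Longrightarrow> (\<lambda>\<omega>. exp_mart a (real_of_ereal (\<tau> \<omega>)) \<omega>) \<in> borel_measurable M"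
  by (rule borel_measurable_at_random_time[OF borel_measurable_stopping_time
        borel_measurable_exp_mart_joint stopping_time_nonneg])

lemma measurable_stopped_value:
  "is_stopping_time F \<tau> \<Longrightarrow> (\<lambda>x. X (max 0 (snd x)) (fst x)) \<in> borel_measurable (M \<Otimes>\<^sub>M lborel)
    \<Longrightarrow> stopped_value X \<tau> \<in> borel_measurable M"
  by (rule borel_measurable_stopped_value[OF borel_measurable_stopping_time _ stopping_time_nonneg])

end

section \<open>Optional stopping\<close>

context brownian_filtration
begin

lemma borel_measurable_exp_mart_time_min:
  assumes st: "is_stopping_time F \<tau>" and t: "0 \<le> t"
  shows "(\<lambda>\<omega>. exp_mart a (time_min \<tau> t \<omega>) \<omega>) \<in> borel_measurable M"
proof -
  have "(\<lambda>\<omega>. exp_mart a (time_min \<tau> t \<omega>) \<omega>)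
      = (\<lambda>\<omega>. if \<tau> \<omega> \<le> ereal t then exp_mart a (real_of_ereal (\<tau> \<omega>)) \<omega> else exp_mart a t \<omega>)"
    by (auto simp: fun_eq_iff time_min_def)
  then show ?thesis
    using borel_measurable_stopping_time[OF st] borel_measurable_exp_mart_at_stopping_time[OF st]
      borel_measurable_exp_mart[OF t] by simp
qed

lemma nn_integral_exp_mart_dyadic:
  assumes st: "is_stopping_time F \<tau>" and t: "t > 0"
  shows "(\<integral>\<^sup>+\<omega>. ennreal (exp_mart a (t * real (dyadic_index t n \<tau> \<omega>) / 2^n) \<omega>) \<partial>M) = 1"
proof -
  define Y where "Y k = exp_mart a (t * real (min k (2^n)) / 2^n)" for k
  have "Y k \<in> borel_measurable M" for k
    unfolding Y_def using t by (intro borel_measurable_exp_mart) auto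
  moreover have "dyadic_index t n \<tau> \<in> measurable M (count_space UNIV)"
    using borel_measurable_stopping_time[OF st] by measurable
  moreover have "(\<integral>\<^sup>+\<omega>. ennreal (indicator {\<omega>\<in>space M. k < dyadic_index t n \<tau> \<omega>} \<omega> * Y (Suc k) \<omega>) \<partial>M)
      = (\<integral>\<^sup>+\<omega>. ennreal (indicator {\<omega>\<in>space M. k < dyadic_index t n \<tau> \<omega>} \<omega> * Y k \<omega>) \<partial>M)" for k
  proof (cases "k < 2^n")
    case True
    let ?s = "t * real k / 2^n"
    have "{\<omega>\<in>space M. k < dyadic_index t n \<tau> \<omega>} = space (F ?s) - {\<omega>\<in>space M. \<tau> \<omega> \<le> ereal ?s}"
      using less_dyadic_index_iff[of \<tau>, OF stopping_time_nonneg[OF st] t True] space_F by auto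
    then have A: "{\<omega>\<in>space M. k < dyadic_index t n \<tau> \<omega>} \<in> sets (F ?s)"
      using stopping_time_le_sets[OF st, of ?s] t by auto
    have Y: "Y (Suc k) = exp_mart a (t * real (Suc k) / 2^n)" "Y k = exp_mart a ?s"
      using True by (simp_all add: Y_def)
    show ?thesis unfolding Y
      by (rule nn_integral_exp_mart_indicator[OF _ _ A]) (use t in \<open>auto simp: field_simps\<close>)
  qed (simp add: Y_def min_def)
  ultimately have "(\<integral>\<^sup>+\<omega>. ennreal (Y (min (dyadic_index t n \<tau> \<omega>) (2^n)) \<omega>) \<partial>M)
      = (\<integral>\<^sup>+\<omega>. ennreal (Y 0 \<omega>) \<partial>M)"
    by (rule nn_integral_discrete_optional_stopping)
  also have "\<dots> = 1" unfolding Y_def using nn_integral_exp_mart[of 0 a] by simp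
  finally show ?thesis
    using dyadic_index_le[of t n \<tau>] by (simp add: Y_def min_absorb1)
qed

text \<open>Optional stopping at \<open>\<tau> \<and> t\<close>: approximate from above on the dyadic grid, and pass to the
  limit using the second moment bound \<open>exp_mart_square\<close>.\<close>
lemma nn_integral_exp_mart_time_min:
  assumes st: "is_stopping_time F \<tau>" and t: "t \<ge> 0"
  shows "(\<integral>\<^sup>+\<omega>. ennreal (exp_mart a (time_min \<tau> t \<omega>) \<omega>) \<partial>M) = 1"
proof (cases "t = 0")
  case True
  then have "time_min \<tau> t \<omega> = 0" for \<omega>
    using stopping_time_nonneg[OF st, of \<omega>] by (auto simp: time_min_def zero_ereal_def)
  then show ?thesis using nn_integral_exp_mart[of 0 a] by simp
next
  case False
  with t have t: "t > 0" by simp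
  define T where "T n \<omega> = t * real (dyadic_index t n \<tau> \<omega>) / 2^n" for n \<omega>
  note bounds = dyadic_index_bounds[of \<tau>, OF stopping_time_nonneg[OF st] t, folded T_def]
  have T0: "0 \<le> T n \<omega>" for n \<omega> using bounds(1,4)[of \<omega>] by (meson order_trans)
  have meas: "(\<lambda>\<omega>. exp_mart b (T n \<omega>) \<omega>) \<in> borel_measurable M" for b n
    unfolding T_def
    by (rule measurable_compose_countable[where f="\<lambda>i. exp_mart b (t * real i / 2^n)"])
      (use t borel_measurable_stopping_time[OF st] in \<open>auto intro!: borel_measurable_exp_mart\<close>)
  have tz: "(\<lambda>n. t / 2^n) \<longlonglongrightarrow> 0"
    by (simp add: LIMSEQ_divide_realpow_zero)
  have "(\<lambda>n. T n \<omega>) \<longlonglongrightarrow> time_min \<tau> t \<omega>" for \<omega>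
  proof (rule tendsto_sandwich[where f="\<lambda>n. time_min \<tau> t \<omega>" and h="\<lambda>n. time_min \<tau> t \<omega> + t / 2^n"])
    show "(\<lambda>n. time_min \<tau> t \<omega> + t / 2^n) \<longlonglongrightarrow> time_min \<tau> t \<omega>"
      using tendsto_add[OF tendsto_const tz] by simp
  qed (use bounds in \<open>auto intro: always_eventually\<close>)
  then have lim: "(\<lambda>n. exp_mart b (T n \<omega>) \<omega>) \<longlonglongrightarrow> exp_mart b (time_min \<tau> t \<omega>) \<omega>"
    if "\<omega> \<in> space M" for b \<omega>
    by (rule continuous_on_tendsto_compose[OF continuous_exp_mart[OF that]])
      (use bounds(4) T0 in auto)
  show ?thesis
  proof (rule nn_integral_limit_eq_1[where Yn="\<lambda>n \<omega>. exp_mart a (T n \<omega>) \<omega>" and Zn="\<lambda>n \<omega>. exp_mart (2 * a) (T n \<omega>) \<omega>" and c="exp (a^2 * t)"])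
    show "(\<lambda>\<omega>. exp_mart a (time_min \<tau> t \<omega>) \<omega>) \<in> borel_measurable M"
      by (rule borel_measurable_exp_mart_time_min[OF st less_imp_le[OF t]])
    show "(exp_mart a (T n \<omega>) \<omega>)\<^sup>2 \<le> exp (a^2 * t) * exp_mart (2 * a) (T n \<omega>) \<omega>" for n \<omega>
      unfolding exp_mart_square using bounds(3)[of n \<omega>] exp_mart_pos[of "2 * a" "T n \<omega>" \<omega>]
      by (intro mult_right_mono) (auto intro: mult_left_mono)
  qed (use meas lim nn_integral_exp_mart_dyadic[OF st t] in \<open>auto simp: T_def less_imp_le[OF exp_mart_pos]\<close>)
qed

lemma nn_integral_exp_mart_stopped_before:
  assumes st: "is_stopping_time F \<tau>" and t: "0 \<le> t"
  shows "(\<integral>\<^sup>+\<omega>. ennreal (indicator {\<omega>\<in>space M. \<tau> \<omega> \<le> ereal t} \<omega> * exp_mart a (real_of_ereal (\<tau> \<omega>)) \<omega>) \<partial>M)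
       = (\<integral>\<^sup>+\<omega>. ennreal (indicator {\<omega>\<in>space M. \<tau> \<omega> \<le> ereal t} \<omega> * exp_mart a t \<omega>) \<partial>M)"
    (is "?X = ?W")
proof -
  let ?A = "{\<omega>\<in>space M. \<tau> \<omega> \<le> ereal t}" and ?N = "{\<omega>\<in>space M. \<not> \<tau> \<omega> \<le> ereal t}"
  have [measurable]: "\<tau> \<in> borel_measurable M" "exp_mart a t \<in> borel_measurable M"
      "(\<lambda>\<omega>. exp_mart a (real_of_ereal (\<tau> \<omega>)) \<omega>) \<in> borel_measurable M"
    using borel_measurable_stopping_time[OF st] borel_measurable_exp_mart[OF t]
      borel_measurable_exp_mart_at_stopping_time[OF st] by auto
  define Z where "Z = (\<integral>\<^sup>+\<omega>. ennreal (indicator ?N \<omega> * exp_mart a t \<omega>) \<partial>M)"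
  \<comment> \<open>both \<open>exp_mart a (\<tau> \<and> t)\<close> and \<open>exp_mart a t\<close> have mean \<open>1\<close> and agree on \<open>{\<tau> > t}\<close>\<close>
  have "1 = (\<integral>\<^sup>+\<omega>. ennreal (exp_mart a (time_min \<tau> t \<omega>) \<omega>) \<partial>M)"
    using nn_integral_exp_mart_time_min[OF st t] by simp
  also have "\<dots> = ?X + Z" unfolding Z_def
    by (subst nn_integral_add[symmetric]) (auto intro!: nn_integral_cong simp: time_min_def indicator_def)
  finally have XZ: "1 = ?X + Z" .
  have "1 = (\<integral>\<^sup>+\<omega>. ennreal (exp_mart a t \<omega>) \<partial>M)" using nn_integral_exp_mart[OF t] by simp
  also have "\<dots> = ?W + Z" unfolding Z_def
    by (subst nn_integral_add[symmetric]) (auto intro!: nn_integral_cong simp: indicator_def)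
  finally have "?X + Z = ?W + Z" using XZ by simp
  moreover have "Z \<noteq> \<infinity>"
  proof
    assume "Z = \<infinity>"
    with XZ show False by simp
  qed
  ultimately show ?thesis by (simp add: ennreal_add_left_cancel add.commute)
qed

lemma stopped_value_eventually:
  assumes "\<omega> \<in> space M" "0 \<le> \<tau> \<omega>" "\<tau> \<omega> \<noteq> \<infinity>"
  shows "\<forall>\<^sub>F n in sequentially. indicator {\<omega>\<in>space M. \<tau> \<omega> \<le> ereal (real n)} \<omega> * X (real_of_ereal (\<tau> \<omega>)) \<omega>
    = stopped_value X \<tau> \<omega> \<and> time_min \<tau> (real n) \<omega> = real_of_ereal (\<tau> \<omega>)"
proof -
  obtain x where x: "\<tau> \<omega> = ereal x" using assms by (cases "\<tau> \<omega>") auto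
  obtain N :: nat where "x \<le> real N" using real_arch_simple by blast
  then show ?thesis
    using x assms(1) by (auto simp: eventually_sequentially stopped_value_def time_min_def indicator_def
        intro!: exI[of _ N])
qed

lemma nn_integral_stopped_exp_mart_le_1:
  assumes st: "is_stopping_time F \<tau>"
  shows "(\<integral>\<^sup>+\<omega>. ennreal (stopped_value (exp_mart a) \<tau> \<omega>) \<partial>M) \<le> 1"
proof -
  have [measurable]: "\<tau> \<in> borel_measurable M" "(\<lambda>\<omega>. exp_mart a (real_of_ereal (\<tau> \<omega>)) \<omega>) \<in> borel_measurable M"
    using borel_measurable_stopping_time[OF st] borel_measurable_exp_mart_at_stopping_time[OF st] .
  define f where "f n \<omega> = ennreal (indicator {\<omega>\<in>space M. \<tau> \<omega> \<le> ereal (real n)} \<omega> * exp_mart a (real_of_ereal (\<tau> \<omega>)) \<omega>)"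
    for n \<omega>
  have "(\<lambda>n. f n \<omega>) \<longlonglongrightarrow> ennreal (stopped_value (exp_mart a) \<tau> \<omega>)" if "\<omega> \<in> space M" for \<omega>
  proof (cases "\<tau> \<omega> = \<infinity>")
    case False
    then show ?thesis unfolding f_def
      using stopped_value_eventually[of \<omega> \<tau> "exp_mart a"] that stopping_time_nonneg[OF st]
      by (intro tendsto_eventually) (auto elim: eventually_mono)
  qed (simp add: f_def stopped_value_def)
  then have "(\<integral>\<^sup>+\<omega>. ennreal (stopped_value (exp_mart a) \<tau> \<omega>) \<partial>M) = (\<integral>\<^sup>+\<omega>. liminf (\<lambda>n. f n \<omega>) \<partial>M)"
    by (intro nn_integral_cong lim_imp_Liminf[symmetric]) auto
  also have "\<dots> \<le> liminf (\<lambda>n. \<integral>\<^sup>+\<omega>. f n \<omega> \<partial>M)"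
    by (rule nn_integral_liminf) (simp add: f_def)
  also have "\<dots> \<le> 1"
  proof -
    have "(\<integral>\<^sup>+\<omega>. f n \<omega> \<partial>M)
        = (\<integral>\<^sup>+\<omega>. ennreal (indicator {\<omega>\<in>space M. \<tau> \<omega> \<le> ereal (real n)} \<omega> * exp_mart a (real n) \<omega>) \<partial>M)" for n
      unfolding f_def by (rule nn_integral_exp_mart_stopped_before[OF st]) simp
    also have "\<dots> n \<le> (\<integral>\<^sup>+\<omega>. ennreal (exp_mart a (real n) \<omega>) \<partial>M)" for n
      by (intro nn_integral_mono) (auto simp: indicator_def less_imp_le[OF exp_mart_pos])
    finally have "limsup (\<lambda>n. \<integral>\<^sup>+\<omega>. f n \<omega> \<partial>M) \<le> 1"
      by (intro Limsup_bounded always_eventually) (simp add: nn_integral_exp_mart)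
    with Liminf_le_Limsup[of sequentially "\<lambda>n. \<integral>\<^sup>+\<omega>. f n \<omega> \<partial>M"] show ?thesis
      by (simp add: order_trans)
  qed
  finally show ?thesis .
qed

lemma integrable_stopped_exp_mart:
  assumes st: "is_stopping_time F \<tau>"
  shows "integrable M (stopped_value (exp_mart a) \<tau>)"
    and "integral\<^sup>L M (stopped_value (exp_mart a) \<tau>) \<le> 1"
proof -
  have nn: "0 \<le> stopped_value (exp_mart a) \<tau> \<omega>" for \<omega>
    by (simp add: stopped_value_def less_imp_le[OF exp_mart_pos])
  have le: "(\<integral>\<^sup>+\<omega>. ennreal (stopped_value (exp_mart a) \<tau> \<omega>) \<partial>M) \<le> 1"
    by (rule nn_integral_stopped_exp_mart_le_1[OF st])
  show i: "integrable M (stopped_value (exp_mart a) \<tau>)"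
    using le nn measurable_stopped_value[OF st borel_measurable_exp_mart_joint]
    by (intro integrableI_nonneg) (auto simp: le_less_trans)
  have "ennreal (integral\<^sup>L M (stopped_value (exp_mart a) \<tau>)) \<le> 1"
    using le nn_integral_eq_integral[OF i] nn by simp
  then show "integral\<^sup>L M (stopped_value (exp_mart a) \<tau>) \<le> 1" by (simp add: ennreal_le_1)
qed

lemma nn_integral_stopped_exp_mart_eq_1:
  assumes st: "is_stopping_time F \<tau>"
    and bound: "\<And>\<omega> s. \<omega> \<in> space M \<Longrightarrow> 0 \<le> s \<Longrightarrow> ereal s \<le> \<tau> \<omega> \<Longrightarrow> exp_mart a s \<omega> \<le> K"
    and lim0: "\<And>\<omega>. \<omega> \<in> space M \<Longrightarrow> \<tau> \<omega> = \<infinity> \<Longrightarrow> (\<lambda>n. exp_mart a (real n) \<omega>) \<longlonglongrightarrow> 0"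
  shows "(\<integral>\<^sup>+\<omega>. ennreal (stopped_value (exp_mart a) \<tau> \<omega>) \<partial>M) = 1"
proof -
  let ?g = "stopped_value (exp_mart a) \<tau>"
  define s where "s n \<omega> = exp_mart a (time_min \<tau> (real n) \<omega>) \<omega>" for n \<omega>
  have gm: "?g \<in> borel_measurable M"
    by (rule measurable_stopped_value[OF st borel_measurable_exp_mart_joint])
  have sm: "s n \<in> borel_measurable M" for n
    unfolding s_def by (rule borel_measurable_exp_mart_time_min[OF st]) simp
  have "integrable M (s n) \<and> integral\<^sup>L M (s n) = 1" for n
    using nn_integral_eq_integrable[where f="s n" and x=1 and M=M] sm
      nn_integral_exp_mart_time_min[OF st, of "real n" a]
    by (auto simp: s_def less_imp_le[OF exp_mart_pos])
  moreover have aelim: "AE \<omega> in M. (\<lambda>n. s n \<omega>) \<longlonglongrightarrow> ?g \<omega>"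
  proof (rule AE_I2)
    fix \<omega> assume \<omega>: "\<omega> \<in> space M"
    show "(\<lambda>n. s n \<omega>) \<longlonglongrightarrow> ?g \<omega>"
    proof (cases "\<tau> \<omega> = \<infinity>")
      case False
      then show ?thesis unfolding s_def
        using stopped_value_eventually[of \<omega> \<tau> "exp_mart a"] \<omega> stopping_time_nonneg[OF st]
        by (intro tendsto_eventually) (auto elim: eventually_mono simp: stopped_value_def)
    qed (use lim0[OF \<omega>] in \<open>simp add: s_def time_min_def stopped_value_def\<close>)
  qed
  moreover have aeb: "AE \<omega> in M. norm (s n \<omega>) \<le> K" for n
    using bound time_min_nonneg[of "real n" \<tau>] time_min_le[of \<tau>] stopping_time_nonneg[OF st]
    by (auto intro!: AE_I2 simp: s_def less_imp_le[OF exp_mart_pos])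
  ultimately have "integrable M ?g" "integral\<^sup>L M ?g = 1"
    using integrable_dominated_convergence[where w="\<lambda>_. K", OF gm sm _ aelim aeb]
      integral_dominated_convergence[where w="\<lambda>_. K", OF gm sm _ aelim aeb]
    by (auto simp: LIMSEQ_const_iff)
  then show ?thesis
    using nn_integral_eq_integral[of M ?g] by (simp add: stopped_value_def less_imp_le[OF exp_mart_pos])
qed

end

section \<open>The reward of a stopping time\<close>

context brownian_filtration
begin

lemma gbm_pos: "p > 0 \<Longrightarrow> gbm p \<mu> \<sigma> B t \<omega> > 0"
  by (simp add: gbm_def)

lemma gbm_adapted: "0 \<le> t \<Longrightarrow> gbm p \<mu> \<sigma> B t \<in> borel_measurable (F t)"
  unfolding gbm_def[abs_def] using B_adapted[of t] by measurable

lemma continuous_gbm: "\<omega> \<in> space M \<Longrightarrow> continuous_on {0..} (\<lambda>t. gbm p \<mu> \<sigma> B t \<omega>)"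
  unfolding gbm_def using continuous_B by (intro continuous_intros) auto

lemma gbm_0: "\<omega> \<in> space M \<Longrightarrow> gbm p \<mu> \<sigma> B 0 \<omega> = p"
  by (simp add: gbm_def B_0)

lemma borel_measurable_gbm_joint[measurable]:
  "(\<lambda>x. gbm p \<mu> \<sigma> B (max 0 (snd x)) (fst x)) \<in> borel_measurable (M \<Otimes>\<^sub>M lborel)"
  by (rule borel_measurable_continuous_process[OF borel_measurable_F[OF gbm_adapted] continuous_gbm])

lemma borel_measurable_gbm_path:
  "\<omega> \<in> space M \<Longrightarrow> (\<lambda>s. gbm p \<mu> \<sigma> B (max 0 s) \<omega>) \<in> borel_measurable lborel"
  using measurable_compose[OF measurable_Pair1'[of \<omega> M lborel] borel_measurable_gbm_joint] by simp

lemma discounted_gbm: "exp (- r * t) * gbm p \<mu> \<sigma> B t \<omega> = p * exp ((\<mu> - r) * t) * exp_mart \<sigma> t \<omega>"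
  by (simp add: gbm_def exp_mart_def exp_add[symmetric] algebra_simps power2_eq_square)

lemma discounted_gbm_powr:
  assumes p: "p > 0" and q: "q > 0" and l: "r - \<mu> * l - 1/2 * \<sigma>\<^sup>2 * l * (l - 1) = 0"
  shows "exp (- r * t) * (gbm p \<mu> \<sigma> B t \<omega> / q) powr l = (p / q) powr l * exp_mart (l * \<sigma>) t \<omega>"
proof -
  have "(gbm p \<mu> \<sigma> B t \<omega> / q) powr l = (p / q) powr l * exp (l * ((\<mu> - \<sigma>\<^sup>2 / 2) * t + \<sigma> * B t \<omega>))"
    using p q by (simp add: gbm_def powr_def exp_add[symmetric] ln_mult ln_div algebra_simps)
  moreover have "r = \<mu> * l + 1/2 * \<sigma>\<^sup>2 * l * (l - 1)" using l by simp
  ultimately show ?thesis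
    by (simp add: exp_mart_def exp_add[symmetric] algebra_simps power2_eq_square power_mult_distrib)
      (simp add: field_simps)
qed

lemma integrable_stopped_discount:
  assumes "is_stopping_time F \<tau>" "r \<ge> 0"
  shows "integrable M (stopped_value (\<lambda>t _. exp (- r * t)) \<tau>)"
  using assms stopping_time_nonneg[OF assms(1)] measurable_stopped_value[OF assms(1)]
  by (intro integrable_const_bound[where B=1])
    (auto simp: stopped_value_def real_of_ereal_pos)

lemma integrable_stopped_discounted_gbm:
  assumes st: "is_stopping_time F \<tau>" and rm: "r > \<mu>" and p: "p > 0"
  shows "integrable M (stopped_value (\<lambda>t \<omega>. exp (- r * t) * gbm p \<mu> \<sigma> B t \<omega>) \<tau>)"
proof (rule Bochner_Integration.integrable_bound)
  show "integrable M (\<lambda>\<omega>. p * stopped_value (exp_mart \<sigma>) \<tau> \<omega>)"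
    using integrable_stopped_exp_mart(1)[OF st] by simp
  show "stopped_value (\<lambda>t \<omega>. exp (- r * t) * gbm p \<mu> \<sigma> B t \<omega>) \<tau> \<in> borel_measurable M"
    by (rule measurable_stopped_value[OF st]) measurable
  have "norm (stopped_value (\<lambda>t \<omega>. exp (- r * t) * gbm p \<mu> \<sigma> B t \<omega>) \<tau> \<omega>)
      \<le> norm (p * stopped_value (exp_mart \<sigma>) \<tau> \<omega>)" for \<omega>
  proof (cases "\<tau> \<omega> = \<infinity>")
    case False
    let ?x = "real_of_ereal (\<tau> \<omega>)"
    have "exp ((\<mu> - r) * ?x) \<le> 1"
      using rm real_of_ereal_pos[OF stopping_time_nonneg[OF st]] by (simp add: mult_nonpos_nonneg)
    then have "p * exp ((\<mu> - r) * ?x) * exp_mart \<sigma> ?x \<omega> \<le> p * exp_mart \<sigma> ?x \<omega>"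
      using p exp_mart_pos[of \<sigma> ?x \<omega>] by (simp add: mult_left_le_one_le)
    then show ?thesis
      using False p exp_mart_pos[of \<sigma> ?x \<omega>] gbm_pos[OF p, of \<mu> \<sigma> ?x \<omega>]
      by (simp add: stopped_value_def discounted_gbm[of r ?x p \<mu> \<sigma> \<omega>, symmetric])
  qed (simp add: stopped_value_def)
  then show "AE \<omega> in M. norm (stopped_value (\<lambda>t \<omega>. exp (- r * t) * gbm p \<mu> \<sigma> B t \<omega>) \<tau> \<omega>)
      \<le> norm (p * stopped_value (exp_mart \<sigma>) \<tau> \<omega>)" by simp
qed

lemma pair_sigma_finite_lborel: "pair_sigma_finite M lborel"
  by (intro pair_sigma_finite.intro prob_space_imp_sigma_finite prob_space_axioms
      lborel.sigma_finite_measure_axioms)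

lemma nn_integral_discounted_gbm_stopped_before:
  assumes st: "is_stopping_time F \<tau>" and p: "p > 0"
  shows "(\<integral>\<^sup>+\<omega>. ennreal (indicator {s. 0 \<le> s \<and> \<tau> \<omega> \<le> ereal s} s * (exp (- r * s) * gbm p \<mu> \<sigma> B s \<omega>)) \<partial>M)
    = (\<integral>\<^sup>+\<omega>. ennreal (indicator {s. 0 \<le> s \<and> \<tau> \<omega> \<le> ereal s} s
        * (p * exp ((\<mu> - r) * s) * exp_mart \<sigma> (real_of_ereal (\<tau> \<omega>)) \<omega>)) \<partial>M)"
proof (cases "0 \<le> s")
  case True
  let ?A = "{\<omega>\<in>space M. \<tau> \<omega> \<le> ereal s}" and ?c = "ennreal (p * exp ((\<mu> - r) * s))"
  have [measurable]: "\<tau> \<in> borel_measurable M"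
      "(\<lambda>\<omega>. exp_mart \<sigma> (real_of_ereal (\<tau> \<omega>)) \<omega>) \<in> borel_measurable M"
      "exp_mart \<sigma> s \<in> borel_measurable M"
    using borel_measurable_stopping_time[OF st] borel_measurable_exp_mart_at_stopping_time[OF st]
      borel_measurable_exp_mart[OF True] by auto
  have A: "indicator {s. 0 \<le> s \<and> \<tau> \<omega> \<le> ereal s} s = (indicator ?A \<omega> :: real)" if "\<omega> \<in> space M" for \<omega>
    using True that by (simp add: indicator_def)
  have "(\<integral>\<^sup>+\<omega>. ennreal (indicator {s. 0 \<le> s \<and> \<tau> \<omega> \<le> ereal s} s * (exp (- r * s) * gbm p \<mu> \<sigma> B s \<omega>)) \<partial>M)
      = (\<integral>\<^sup>+\<omega>. ?c * ennreal (indicator ?A \<omega> * exp_mart \<sigma> s \<omega>) \<partial>M)"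
  proof (intro nn_integral_cong)
    fix \<omega> assume "\<omega> \<in> space M"
    have "exp (- r * s) * gbm p \<mu> \<sigma> B s \<omega> = p * exp ((\<mu> - r) * s) * exp_mart \<sigma> s \<omega>"
      by (rule discounted_gbm)
    then show "ennreal (indicator {s. 0 \<le> s \<and> \<tau> \<omega> \<le> ereal s} s * (exp (- r * s) * gbm p \<mu> \<sigma> B s \<omega>))
        = ?c * ennreal (indicator ?A \<omega> * exp_mart \<sigma> s \<omega>)"
      using p A[OF \<open>\<omega> \<in> space M\<close>]
      by (simp only:) (simp add: ennreal_mult[symmetric] less_imp_le[OF exp_mart_pos] mult_ac)
  qed
  also have "\<dots> = ?c * (\<integral>\<^sup>+\<omega>. ennreal (indicator ?A \<omega> * exp_mart \<sigma> (real_of_ereal (\<tau> \<omega>)) \<omega>) \<partial>M)"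
    by (simp add: nn_integral_cmult nn_integral_exp_mart_stopped_before[OF st True])
  also have "\<dots> = (\<integral>\<^sup>+\<omega>. ennreal (indicator {s. 0 \<le> s \<and> \<tau> \<omega> \<le> ereal s} s
      * (p * exp ((\<mu> - r) * s) * exp_mart \<sigma> (real_of_ereal (\<tau> \<omega>)) \<omega>)) \<partial>M)"
    using p A by (subst nn_integral_cmult[symmetric]) (auto intro!: nn_integral_cong
        simp: ennreal_mult[symmetric] less_imp_le[OF exp_mart_pos] mult_ac)
  finally show ?thesis .
qed (simp add: indicator_def)

text \<open>By Fubini's theorem and the martingale property, at each time \<open>s \<ge> \<tau>\<close> the discounted price
  may be replaced by \<open>p * exp ((\<mu> - r) * s)\<close> times the exponential martingale frozen at \<open>\<tau>\<close>.\<close>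
lemma nn_integral_discounted_gbm_after_stop:
  assumes rm: "r > \<mu>" and p: "p > 0" and st: "is_stopping_time F \<tau>"
  shows "(\<integral>\<^sup>+\<omega>. (\<integral>\<^sup>+s. ennreal (indicator {s. 0 \<le> s \<and> \<tau> \<omega> \<le> ereal s} s
      * (exp (- r * s) * gbm p \<mu> \<sigma> B s \<omega>)) \<partial>lborel) \<partial>M)
    = (\<integral>\<^sup>+\<omega>. ennreal (stopped_value (\<lambda>t \<omega>. exp (- r * t) * gbm p \<mu> \<sigma> B t \<omega>) \<tau> \<omega> / (r - \<mu>)) \<partial>M)"
proof -
  interpret pair_sigma_finite M lborel by (rule pair_sigma_finite_lborel)
  have [measurable]: "\<tau> \<in> borel_measurable M"
      "(\<lambda>\<omega>. exp_mart \<sigma> (real_of_ereal (\<tau> \<omega>)) \<omega>) \<in> borel_measurable M"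
    using borel_measurable_stopping_time[OF st] borel_measurable_exp_mart_at_stopping_time[OF st] .
  let ?S = "\<lambda>\<omega>. {s. 0 \<le> s \<and> \<tau> \<omega> \<le> ereal s}"
  let ?f = "\<lambda>\<omega> s. ennreal (indicator (?S \<omega>) s * (exp (- r * s) * gbm p \<mu> \<sigma> B s \<omega>))"
  let ?g = "\<lambda>\<omega> s. ennreal (indicator (?S \<omega>) s
      * (p * exp ((\<mu> - r) * s) * exp_mart \<sigma> (real_of_ereal (\<tau> \<omega>)) \<omega>))"
  have "?f = (\<lambda>\<omega> s. ennreal (indicator (?S \<omega>) s * (exp (- r * max 0 s) * gbm p \<mu> \<sigma> B (max 0 s) \<omega>)))"
    by (auto simp: fun_eq_iff indicator_def)
  then have fm: "case_prod ?f \<in> borel_measurable (M \<Otimes>\<^sub>M lborel)" by simp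
  have "(\<integral>\<^sup>+\<omega>. (\<integral>\<^sup>+s. ?f \<omega> s \<partial>lborel) \<partial>M) = (\<integral>\<^sup>+s. (\<integral>\<^sup>+\<omega>. ?f \<omega> s \<partial>M) \<partial>lborel)"
    by (rule Fubini'[OF fm, symmetric])
  also have "\<dots> = (\<integral>\<^sup>+s. (\<integral>\<^sup>+\<omega>. ?g \<omega> s \<partial>M) \<partial>lborel)"
    by (rule nn_integral_cong) (rule nn_integral_discounted_gbm_stopped_before[OF st p])
  also have "\<dots> = (\<integral>\<^sup>+\<omega>. (\<integral>\<^sup>+s. ?g \<omega> s \<partial>lborel) \<partial>M)"
    by (rule Fubini') measurable
  also have "\<dots> = (\<integral>\<^sup>+\<omega>. ennreal (stopped_value (\<lambda>t \<omega>. exp (- r * t) * gbm p \<mu> \<sigma> B t \<omega>) \<tau> \<omega> / (r - \<mu>)) \<partial>M)"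
  proof (intro nn_integral_cong)
    fix \<omega> assume \<omega>: "\<omega> \<in> space M"
    show "(\<integral>\<^sup>+s. ?g \<omega> s \<partial>lborel)
      = ennreal (stopped_value (\<lambda>t \<omega>. exp (- r * t) * gbm p \<mu> \<sigma> B t \<omega>) \<tau> \<omega> / (r - \<mu>))"
    proof (cases "\<tau> \<omega>")
      case (real x)
      let ?e = "ennreal (p * exp_mart \<sigma> x \<omega>)"
      have "(\<integral>\<^sup>+s. ?g \<omega> s \<partial>lborel) = (\<integral>\<^sup>+s. ?e * (indicator {x..} s * ennreal (exp (- (r - \<mu>) * s))) \<partial>lborel)"
        using real p stopping_time_nonneg[OF st, of \<omega>] by (intro nn_integral_cong)
          (auto simp: indicator_def ennreal_mult[symmetric] less_imp_le[OF exp_mart_pos] algebra_simps)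
      also have "\<dots> = ?e * ennreal (exp (- (r - \<mu>) * x) / (r - \<mu>))"
        using nn_integral_exp_neg_atLeast[of "r - \<mu>" x] rm by (subst nn_integral_cmult) auto
      finally show ?thesis
        using real p rm discounted_gbm[of r x p \<mu> \<sigma> \<omega>]
        by (simp add: stopped_value_def ennreal_mult[symmetric] less_imp_le[OF exp_mart_pos] algebra_simps)
    qed (use stopping_time_nonneg[OF st, of \<omega>] in \<open>auto simp: stopped_value_def indicator_def\<close>)
  qed
  finally show ?thesis .
qed

lemma nn_integral_discounted_gbm_before_stop:
  assumes rm: "r > \<mu>" and p: "p > 0" and st: "is_stopping_time F \<tau>"
  shows "(\<integral>\<^sup>+\<omega>. (\<integral>\<^sup>+s. ennreal (indicator {s. 0 \<le> s \<and> ereal s < \<tau> \<omega>} s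
      * (exp (- r * s) * gbm p \<mu> \<sigma> B s \<omega>)) \<partial>lborel) \<partial>M)
    = ennreal ((p - (\<integral>\<omega>. stopped_value (\<lambda>t \<omega>. exp (- r * t) * gbm p \<mu> \<sigma> B t \<omega>) \<tau> \<omega> \<partial>M)) / (r - \<mu>))"
    and "(\<integral>\<omega>. stopped_value (\<lambda>t \<omega>. exp (- r * t) * gbm p \<mu> \<sigma> B t \<omega>) \<tau> \<omega> \<partial>M) \<le> p"
proof -
  let ?Q = "stopped_value (\<lambda>t \<omega>. exp (- r * t) * gbm p \<mu> \<sigma> B t \<omega>)"
  let ?f = "\<lambda>\<omega> s. exp (- r * s) * gbm p \<mu> \<sigma> B s \<omega>"
  let ?J = "\<lambda>\<omega>. \<integral>\<^sup>+s. ennreal (indicator {s. 0 \<le> s \<and> ereal s < \<tau> \<omega>} s * ?f \<omega> s) \<partial>lborel"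
  let ?L = "\<lambda>\<omega>. \<integral>\<^sup>+s. ennreal (indicator {s. 0 \<le> s \<and> \<tau> \<omega> \<le> ereal s} s * ?f \<omega> s) \<partial>lborel"
  let ?T = "\<lambda>\<omega>. \<integral>\<^sup>+s. ennreal (indicator {s. 0 \<le> s \<and> 0 \<le> ereal s} s * ?f \<omega> s) \<partial>lborel"
  have [measurable]: "\<tau> \<in> borel_measurable M" by (rule borel_measurable_stopping_time[OF st])
  have "?J = (\<lambda>\<omega>. \<integral>\<^sup>+s. ennreal (indicator {s. 0 \<le> s \<and> ereal s < \<tau> \<omega>} s * ?f \<omega> (max 0 s)) \<partial>lborel)"
    "?L = (\<lambda>\<omega>. \<integral>\<^sup>+s. ennreal (indicator {s. 0 \<le> s \<and> \<tau> \<omega> \<le> ereal s} s * ?f \<omega> (max 0 s)) \<partial>lborel)"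
    by (auto simp: fun_eq_iff indicator_def intro!: nn_integral_cong)
  then have Jm: "?J \<in> borel_measurable M" and Lm: "?L \<in> borel_measurable M" by simp_all
  have EQ: "0 \<le> integral\<^sup>L M (?Q \<tau>)"
    using gbm_pos[OF p] by (intro integral_nonneg_AE) (auto simp: stopped_value_def less_imp_le)
  have "(\<integral>\<^sup>+\<omega>. ?J \<omega> \<partial>M) + (\<integral>\<^sup>+\<omega>. ?L \<omega> \<partial>M) = (\<integral>\<^sup>+\<omega>. ?J \<omega> + ?L \<omega> \<partial>M)"
    by (rule nn_integral_add[symmetric, OF Jm Lm])
  also have "\<dots> = (\<integral>\<^sup>+\<omega>. ?T \<omega> \<partial>M)"
  proof (rule nn_integral_cong)
    fix \<omega> assume "\<omega> \<in> space M"
    note [measurable] = borel_measurable_gbm_path[OF this]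
    show "?J \<omega> + ?L \<omega> = ?T \<omega>"
      using gbm_pos[OF p] by (intro nn_integral_split_at) (auto simp: less_imp_le)
  qed
  also have "\<dots> = (\<integral>\<^sup>+\<omega>. ennreal (?Q (\<lambda>_. 0) \<omega> / (r - \<mu>)) \<partial>M)"
    by (rule nn_integral_discounted_gbm_after_stop[OF rm p stopping_time_const]) simp
  also have "\<dots> = ennreal (p / (r - \<mu>))"
    by (simp add: nn_integral_cong[of M _ "\<lambda>_. ennreal (p / (r - \<mu>))"] stopped_value_def gbm_0
        emeasure_space_1)
  finally have JLT: "(\<integral>\<^sup>+\<omega>. ?J \<omega> \<partial>M) + (\<integral>\<^sup>+\<omega>. ?L \<omega> \<partial>M) = ennreal (p / (r - \<mu>))" .
  have "(\<integral>\<^sup>+\<omega>. ?L \<omega> \<partial>M) = (\<integral>\<^sup>+\<omega>. ennreal (?Q \<tau> \<omega> / (r - \<mu>)) \<partial>M)"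
    by (rule nn_integral_discounted_gbm_after_stop[OF rm p st])
  also have "\<dots> = ennreal (integral\<^sup>L M (\<lambda>\<omega>. ?Q \<tau> \<omega> / (r - \<mu>)))"
    using integrable_divide[OF integrable_stopped_discounted_gbm[OF st rm p]] gbm_pos[OF p] rm
    by (intro nn_integral_eq_integral) (auto simp: stopped_value_def less_imp_le)
  finally have "(\<integral>\<^sup>+\<omega>. ?J \<omega> \<partial>M) + ennreal (integral\<^sup>L M (?Q \<tau>) / (r - \<mu>)) = ennreal (p / (r - \<mu>))"
    using JLT by simp
  from ennreal_add_eq_ennreal_imp[OF this] EQ rm p
  show "(\<integral>\<^sup>+\<omega>. ?J \<omega> \<partial>M) = ennreal ((p - integral\<^sup>L M (?Q \<tau>)) / (r - \<mu>))"
    and "integral\<^sup>L M (?Q \<tau>) \<le> p"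
    by (simp_all add: diff_divide_distrib divide_le_cancel)
qed

lemma integral_discounted_gbm_before_stop:
  fixes \<sigma> :: real
  assumes rm: "r > \<mu>" and p: "p > 0" and st: "is_stopping_time F \<tau>"
  defines "J \<equiv> \<lambda>\<omega>. \<integral>\<^sup>+s. ennreal (indicator {s. 0 \<le> s \<and> ereal s < \<tau> \<omega>} s
      * (exp (- r * s) * gbm p \<mu> \<sigma> B s \<omega>)) \<partial>lborel"
  shows "AE \<omega> in M. J \<omega> \<noteq> \<infinity>" and "integrable M (\<lambda>\<omega>. enn2real (J \<omega>))"
    and "(\<integral>\<omega>. enn2real (J \<omega>) \<partial>M)
      = (p - (\<integral>\<omega>. stopped_value (\<lambda>t \<omega>. exp (- r * t) * gbm p \<mu> \<sigma> B t \<omega>) \<tau> \<omega> \<partial>M)) / (r - \<mu>)"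
proof -
  let ?EQ = "\<integral>\<omega>. stopped_value (\<lambda>t \<omega>. exp (- r * t) * gbm p \<mu> \<sigma> B t \<omega>) \<tau> \<omega> \<partial>M"
  have [measurable]: "\<tau> \<in> borel_measurable M" by (rule borel_measurable_stopping_time[OF st])
  have "J = (\<lambda>\<omega>. \<integral>\<^sup>+s. ennreal (indicator {s. 0 \<le> s \<and> ereal s < \<tau> \<omega>} s
      * (exp (- r * s) * gbm p \<mu> \<sigma> B (max 0 s) \<omega>)) \<partial>lborel)"
    by (auto simp: fun_eq_iff J_def indicator_def intro!: nn_integral_cong)
  then have Jm: "J \<in> borel_measurable M" by simp
  have intJ: "(\<integral>\<^sup>+\<omega>. J \<omega> \<partial>M) = ennreal ((p - ?EQ) / (r - \<mu>))" and EQ: "?EQ \<le> p"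
    unfolding J_def by (rule nn_integral_discounted_gbm_before_stop[OF rm p st])+
  show fin: "AE \<omega> in M. J \<omega> \<noteq> \<infinity>"
    using intJ by (intro nn_integral_PInf_AE[OF Jm]) simp
  have "(\<integral>\<^sup>+\<omega>. ennreal (enn2real (J \<omega>)) \<partial>M) = ennreal ((p - ?EQ) / (r - \<mu>))"
    using fin intJ by (subst nn_integral_cong_AE[where v=J]) (auto simp: ennreal_enn2real_if)
  moreover have "0 \<le> (p - ?EQ) / (r - \<mu>)" using EQ rm by simp
  moreover have "(\<lambda>\<omega>. enn2real (J \<omega>)) \<in> borel_measurable M" using Jm by measurable
  ultimately show "integrable M (\<lambda>\<omega>. enn2real (J \<omega>))"
    and "(\<integral>\<omega>. enn2real (J \<omega>) \<partial>M) = (p - ?EQ) / (r - \<mu>)"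
    using nn_integral_eq_integrable[of "\<lambda>\<omega>. enn2real (J \<omega>)" M] by auto
qed

lemma borel_measurable_running_reward:
  assumes st: "is_stopping_time F \<tau>"
  shows "(\<lambda>\<omega>. LINT s:{s. 0 \<le> s \<and> ereal s < \<tau> \<omega>}|lborel. exp (- r * s) * (gbm p \<mu> \<sigma> B s \<omega> - C))
    \<in> borel_measurable M"
proof -
  have [measurable]: "\<tau> \<in> borel_measurable M" by (rule borel_measurable_stopping_time[OF st])
  have "(\<lambda>\<omega>. LINT s:{s. 0 \<le> s \<and> ereal s < \<tau> \<omega>}|lborel. exp (- r * s) * (gbm p \<mu> \<sigma> B s \<omega> - C))
      = (\<lambda>\<omega>. \<integral>s. indicator {s. 0 \<le> s \<and> ereal s < \<tau> \<omega>} s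
          * (exp (- r * s) * (gbm p \<mu> \<sigma> B (max 0 s) \<omega> - C)) \<partial>lborel)"
    unfolding set_lebesgue_integral_def
    by (auto simp: fun_eq_iff indicator_def intro!: Bochner_Integration.integral_cong)
  moreover have "(\<lambda>\<omega>. \<integral>s. indicator {s. 0 \<le> s \<and> ereal s < \<tau> \<omega>} s
      * (exp (- r * s) * (gbm p \<mu> \<sigma> B (max 0 s) \<omega> - C)) \<partial>lborel) \<in> borel_measurable M"
    by (rule lborel.borel_measurable_lebesgue_integral) measurable
  ultimately show ?thesis by simp
qed

lemma reward_integrand_gbm:
  fixes \<mu> \<sigma> :: real
  assumes r: "r > 0" and p: "p > 0" and st: "is_stopping_time F \<tau>" and \<omega>: "\<omega> \<in> space M"
  defines "J \<equiv> \<integral>\<^sup>+s. ennreal (indicator {s. 0 \<le> s \<and> ereal s < \<tau> \<omega>} s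
      * (exp (- r * s) * gbm p \<mu> \<sigma> B s \<omega>)) \<partial>lborel"
  assumes fin: "J \<noteq> \<infinity>"
  shows "(LINT s:{s. 0 \<le> s \<and> ereal s < \<tau> \<omega>}|lborel. exp (- r * s) * (gbm p \<mu> \<sigma> B s \<omega> - C))
      - (if \<tau> \<omega> = \<infinity> then 0
         else exp (- r * real_of_ereal (\<tau> \<omega>)) * (l1 * gbm p \<mu> \<sigma> B (real_of_ereal (\<tau> \<omega>)) \<omega> + l0))
    = enn2real J - C / r * (1 - stopped_value (\<lambda>t _. exp (- r * t)) \<tau> \<omega>)
      - l1 * stopped_value (\<lambda>t \<omega>. exp (- r * t) * gbm p \<mu> \<sigma> B t \<omega>) \<tau> \<omega>
      - l0 * stopped_value (\<lambda>t _. exp (- r * t)) \<tau> \<omega>"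
proof -
  have "(LINT s:{s. 0 \<le> s \<and> ereal s < \<tau> \<omega>}|lborel. exp (- r * s) * (gbm p \<mu> \<sigma> B s \<omega> - C))
    = enn2real J - C * ((1 - (if \<tau> \<omega> = \<infinity> then 0 else exp (- r * real_of_ereal (\<tau> \<omega>)))) / r)"
    unfolding J_def using fin gbm_pos[OF p] borel_measurable_gbm_path[OF \<omega>]
    by (intro set_integral_discounted_before[OF r stopping_time_nonneg[OF st]])
      (auto simp: J_def less_imp_le)
  then show ?thesis
    using r by (cases "\<tau> \<omega> = \<infinity>") (simp_all add: stopped_value_def field_simps)
qed

lemma stop_reward_gbm:
  assumes rm: "r > \<mu>" and r: "r > 0" and p: "p > 0" and st: "is_stopping_time F \<tau>"
  shows "stop_reward M r C l1 l0 (gbm p \<mu> \<sigma> B) \<tau> = p / (r - \<mu>) - C / r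
     - (1 / (r - \<mu>) + l1) * (\<integral>\<omega>. stopped_value (\<lambda>t \<omega>. exp (- r * t) * gbm p \<mu> \<sigma> B t \<omega>) \<tau> \<omega> \<partial>M)
     + (C / r - l0) * (\<integral>\<omega>. stopped_value (\<lambda>t _. exp (- r * t)) \<tau> \<omega> \<partial>M)"
proof -
  let ?P = "gbm p \<mu> \<sigma> B"
  let ?Q = "stopped_value (\<lambda>t \<omega>. exp (- r * t) * ?P t \<omega>) \<tau>" and ?D = "stopped_value (\<lambda>t _. exp (- r * t)) \<tau>"
  define J where "J \<omega> = (\<integral>\<^sup>+s. ennreal (indicator {s. 0 \<le> s \<and> ereal s < \<tau> \<omega>} s * (exp (- r * s) * ?P s \<omega>)) \<partial>lborel)"
    for \<omega>
  define R where "R \<omega> = (LINT s:{s. 0 \<le> s \<and> ereal s < \<tau> \<omega>}|lborel. exp (- r * s) * (?P s \<omega> - C))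
    - (if \<tau> \<omega> = \<infinity> then 0 else exp (- r * real_of_ereal (\<tau> \<omega>)) * (l1 * ?P (real_of_ereal (\<tau> \<omega>)) \<omega> + l0))"
    for \<omega>
  define R' where "R' \<omega> = enn2real (J \<omega>) - C / r * (1 - ?D \<omega>) - l1 * ?Q \<omega> - l0 * ?D \<omega>" for \<omega>
  have J: "AE \<omega> in M. J \<omega> \<noteq> \<infinity>" "integrable M (\<lambda>\<omega>. enn2real (J \<omega>))"
    "(\<integral>\<omega>. enn2real (J \<omega>) \<partial>M) = (p - integral\<^sup>L M ?Q) / (r - \<mu>)"
    unfolding J_def by (rule integral_discounted_gbm_before_stop[OF rm p st])+
  have [measurable]: "\<tau> \<in> borel_measurable M" by (rule borel_measurable_stopping_time[OF st])
  have [measurable]: "(\<lambda>\<omega>. ?P (real_of_ereal (\<tau> \<omega>)) \<omega>) \<in> borel_measurable M"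
    by (rule borel_measurable_at_random_time[OF _ borel_measurable_gbm_joint stopping_time_nonneg[OF st]])
      simp
  note [measurable] = borel_measurable_running_reward[OF st] borel_measurable_integrable[OF J(2)]
    measurable_stopped_value[OF st]
  have Rm: "R \<in> borel_measurable M" unfolding R_def[abs_def] by measurable
  have R'm: "R' \<in> borel_measurable M" unfolding R'_def[abs_def] by measurable
  have "AE \<omega> in M. R \<omega> = R' \<omega>"
    using J(1)
  proof (rule AE_mp, intro AE_I2 impI)
    fix \<omega> assume "\<omega> \<in> space M" "J \<omega> \<noteq> \<infinity>"
    then show "R \<omega> = R' \<omega>"
      unfolding R_def R'_def J_def by (rule reward_integrand_gbm[OF r p st])
  qed
  then have "stop_reward M r C l1 l0 ?P \<tau> = integral\<^sup>L M R'"
    unfolding stop_reward_def R_def[symmetric]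
    by (rule integral_cong_AE[OF Rm R'm])
  also have "\<dots> = (p - integral\<^sup>L M ?Q) / (r - \<mu>) - C / r * (1 - integral\<^sup>L M ?D)
      - l1 * integral\<^sup>L M ?Q - l0 * integral\<^sup>L M ?D"
    using J(2,3) integrable_stopped_discounted_gbm[OF st rm p] integrable_stopped_discount[OF st] r
    unfolding R'_def by (simp add: prob_space)
  finally show ?thesis by (simp add: algebra_simps add_divide_distrib diff_divide_distrib)
qed

end

section \<open>First passage times\<close>

context brownian_filtration
begin

lemma exists_le_on_interval_sets:
  fixes X :: "real \<Rightarrow> 'a \<Rightarrow> real" and c :: real
  assumes adapted: "\<And>t. 0 \<le> t \<Longrightarrow> X t \<in> borel_measurable (F t)"
    and cont: "\<And>\<omega>. \<omega> \<in> space M \<Longrightarrow> continuous_on {0..} (\<lambda>t. X t \<omega>)"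
    and ab: "0 \<le> a" "a < b"
  shows "{\<omega>\<in>space M. \<exists>s\<in>{a..b}. X s \<omega> \<le> c} \<in> sets (F b)"
proof -
  let ?Q = "\<rat> \<inter> {a..b}"
  have "{\<omega>\<in>space M. \<exists>s\<in>{a..b}. X s \<omega> \<le> c}
      = (\<Inter>m::nat. \<Union>q\<in>?Q. {\<omega>\<in>space M. X q \<omega> < c + 1 / (real m + 1)})"
  proof -
    have "(\<exists>s\<in>{a..b}. X s \<omega> \<le> c) \<longleftrightarrow> (\<forall>m::nat. \<exists>q\<in>?Q. X q \<omega> < c + 1 / (real m + 1))"
      if "\<omega> \<in> space M" for \<omega>
      using exists_le_on_interval_iff_rational[OF continuous_on_subset[OF cont[OF that]] ab(2)] ab
      by auto
    then show ?thesis by auto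
  qed
  also have "\<dots> \<in> sets (F b)"
  proof (intro sets.countable_INT' image_subsetI sets.countable_UN'')
    show "countable ?Q" by (rule countable_subset[OF _ countable_rat]) auto
    fix m :: nat and q assume "q \<in> ?Q"
    then have q: "0 \<le> q" "q \<le> b" using ab by auto
    have "{\<omega>\<in>space (F q). X q \<omega> < c + 1 / (real m + 1)} \<in> sets (F q)"
      using adapted[OF q(1)] by measurable
    then show "{\<omega>\<in>space M. X q \<omega> < c + 1 / (real m + 1)} \<in> sets (F b)"
      using sets_F_mono[OF q] space_F by auto
  qed auto
  finally show ?thesis .
qed

lemma first_passage_below_less_sets:
  assumes adapted: "\<And>t. 0 \<le> t \<Longrightarrow> X t \<in> borel_measurable (F t)"
    and cont: "\<And>\<omega>. \<omega> \<in> space M \<Longrightarrow> continuous_on {0..} (\<lambda>t. X t \<omega>)"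
  shows "{\<omega>\<in>space M. first_passage_below (\<lambda>t. X t \<omega>) c < ereal u} \<in> sets (F u)"
proof -
  let ?I = "{ab \<in> \<rat> \<times> \<rat>. 0 < fst ab \<and> fst ab < snd ab \<and> snd ab < u}"
  have "{\<omega>\<in>space M. first_passage_below (\<lambda>t. X t \<omega>) c < ereal u}
      = (\<Union>ab\<in>?I. {\<omega>\<in>space M. \<exists>s\<in>{fst ab..snd ab}. X s \<omega> \<le> c})"
  proof (intro equalityI subsetI)
    fix \<omega> assume "\<omega> \<in> {\<omega>\<in>space M. first_passage_below (\<lambda>t. X t \<omega>) c < ereal u}"
    then obtain t where \<omega>: "\<omega> \<in> space M" and t: "0 < t" "t < u" "X t \<omega> \<le> c"
      by (auto simp: first_passage_below_less_iff)
    obtain a where "a \<in> \<rat>" "0 < a" "a < t" using Rats_dense_in_real[OF t(1)] by blast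
    moreover obtain b where "b \<in> \<rat>" "t < b" "b < u" using Rats_dense_in_real[OF t(2)] by blast
    ultimately show "\<omega> \<in> (\<Union>ab\<in>?I. {\<omega>\<in>space M. \<exists>s\<in>{fst ab..snd ab}. X s \<omega> \<le> c})"
      using t \<omega> by (intro UN_I[of "(a, b)"]) auto
  next
    fix \<omega> assume "\<omega> \<in> (\<Union>ab\<in>?I. {\<omega>\<in>space M. \<exists>s\<in>{fst ab..snd ab}. X s \<omega> \<le> c})"
    then obtain a b s where "\<omega> \<in> space M" "0 < a" "a \<le> s" "s \<le> b" "b < u" "X s \<omega> \<le> c"
      by auto
    then show "\<omega> \<in> {\<omega>\<in>space M. first_passage_below (\<lambda>t. X t \<omega>) c < ereal u}"
      by (auto simp: first_passage_below_less_iff intro!: exI[of _ s])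
  qed
  also have "\<dots> \<in> sets (F u)"
  proof (rule sets.countable_UN'')
    show "countable ?I"
      by (rule countable_subset[OF _ countable_SIGMA[OF countable_rat countable_rat]]) auto
    fix ab assume "ab \<in> ?I"
    then show "{\<omega>\<in>space M. \<exists>s\<in>{fst ab..snd ab}. X s \<omega> \<le> c} \<in> sets (F u)"
      using exists_le_on_interval_sets[OF adapted cont, of "fst ab" "snd ab" c]
        sets_F_mono[of "snd ab" u] by auto
  qed
  finally show ?thesis .
qed

text \<open>The right-continuity of the filtration turns the open-set events \<open>{\<tau> < u}\<close> into stopping
  time events \<open>{\<tau> \<le> t}\<close>.\<close>
lemma first_passage_below_stopping_time:
  assumes adapted: "\<And>t. 0 \<le> t \<Longrightarrow> X t \<in> borel_measurable (F t)"
    and cont: "\<And>\<omega>. \<omega> \<in> space M \<Longrightarrow> continuous_on {0..} (\<lambda>t. X t \<omega>)"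
  shows "is_stopping_time F (\<lambda>\<omega>. first_passage_below (\<lambda>t. X t \<omega>) c)"
  unfolding is_stopping_time_def
proof (intro conjI allI impI first_passage_below_nonneg)
  fix t :: real assume t: "0 \<le> t"
  let ?\<tau> = "\<lambda>\<omega>. first_passage_below (\<lambda>t. X t \<omega>) c"
  show "{\<omega> \<in> space (F t). ?\<tau> \<omega> \<le> ereal t} \<in> sets (F t)"
  proof (rule sets_F_right_continuous[OF t])
    fix u assume u: "u > t"
    have "{\<omega> \<in> space (F t). ?\<tau> \<omega> \<le> ereal t}
        = (\<Inter>n::nat. {\<omega>\<in>space M. ?\<tau> \<omega> < ereal (t + (u - t) / (real n + 1))})"
    proof (intro equalityI subsetI)
      fix \<omega> assume \<omega>: "\<omega> \<in> (\<Inter>n::nat. {\<omega>\<in>space M. ?\<tau> \<omega> < ereal (t + (u - t) / (real n + 1))})"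
      have "?\<tau> \<omega> \<le> ereal t + ereal e" if e: "e > 0" for e
      proof -
        have "0 < e / (u - t)" using u e by simp
        then obtain n :: nat where "inverse (real (Suc n)) < e / (u - t)"
          using reals_Archimedean by blast
        then have "t + (u - t) / (real n + 1) \<le> t + e"
          using u by (simp add: inverse_eq_divide field_simps)
        then show ?thesis using \<omega> by (auto intro: order_trans[OF less_imp_le])
      qed
      then show "\<omega> \<in> {\<omega> \<in> space (F t). ?\<tau> \<omega> \<le> ereal t}"
        using \<omega> space_F by (auto intro: ereal_le_epsilon2)
    qed (use u space_F in \<open>auto intro: le_less_trans simp: add_pos_pos\<close>)
    also have "\<dots> \<in> sets (F u)"
    proof (intro sets.countable_INT' image_subsetI)
      fix n :: nat
      have "0 < (u - t) / (real n + 1)" "(u - t) / (real n + 1) \<le> (u - t) / 1"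
        using u by (auto intro!: divide_left_mono simp del: div_by_1)
      then have "0 < t + (u - t) / (real n + 1)" "t + (u - t) / (real n + 1) \<le> u"
        using t by auto
      then have "sets (F (t + (u - t) / (real n + 1))) \<subseteq> sets (F u)" by (intro sets_F_mono) auto
      then show "{\<omega>\<in>space M. ?\<tau> \<omega> < ereal (t + (u - t) / (real n + 1))} \<in> sets (F u)"
        using first_passage_below_less_sets[OF adapted cont, of c "t + (u - t) / (real n + 1)"] by blast
    qed auto
    finally show "{\<omega> \<in> space (F t). ?\<tau> \<omega> \<le> ereal t} \<in> sets (F u)" .
  qed
qed

lemma first_passage_gbm_stopping_time:
  "is_stopping_time F (\<lambda>\<omega>. first_passage_below (\<lambda>t. gbm p \<mu> \<sigma> B t \<omega>) c)"
  by (rule first_passage_below_stopping_time[OF gbm_adapted continuous_gbm])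

lemma gbm_first_passage:
  assumes \<omega>: "\<omega> \<in> space M" and c: "c \<le> p"
  shows "first_passage_below (\<lambda>t. gbm p \<mu> \<sigma> B t \<omega>) c = ereal x \<Longrightarrow> gbm p \<mu> \<sigma> B x \<omega> = c"
    and "0 \<le> s \<Longrightarrow> ereal s \<le> first_passage_below (\<lambda>t. gbm p \<mu> \<sigma> B t \<omega>) c \<Longrightarrow> c \<le> gbm p \<mu> \<sigma> B s \<omega>"
proof -
  show at: "gbm p \<mu> \<sigma> B x \<omega> = c" if "first_passage_below (\<lambda>t. gbm p \<mu> \<sigma> B t \<omega>) c = ereal x" for x
    using at_first_passage[OF continuous_gbm[OF \<omega>]] gbm_0[OF \<omega>] that c by simp
  assume "0 \<le> s" "ereal s \<le> first_passage_below (\<lambda>t. gbm p \<mu> \<sigma> B t \<omega>) c"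
  then show "c \<le> gbm p \<mu> \<sigma> B s \<omega>"
    using above_before_first_passage[of c "\<lambda>t. gbm p \<mu> \<sigma> B t \<omega>" s] at[of s] gbm_0[OF \<omega>] c
    by (cases "ereal s = first_passage_below (\<lambda>t. gbm p \<mu> \<sigma> B t \<omega>) c") auto
qed

lemma exp_mart_before_first_passage:
  assumes p: "p > 0" and c: "0 < c" "c \<le> p"
    and l: "r - \<mu> * l - 1/2 * \<sigma>\<^sup>2 * l * (l - 1) = 0" "l < 0"
    and \<omega>: "\<omega> \<in> space M" and s: "0 \<le> s" "ereal s \<le> first_passage_below (\<lambda>t. gbm p \<mu> \<sigma> B t \<omega>) c"
  shows "exp_mart (l * \<sigma>) s \<omega> \<le> exp (- r * s) * (c / p) powr l"
proof -
  have "(gbm p \<mu> \<sigma> B s \<omega> / c) powr l \<le> 1"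
    using powr_mono2'[of l 1 "gbm p \<mu> \<sigma> B s \<omega> / c"] gbm_first_passage(2)[OF \<omega> c(2) s] c l(2) by simp
  then have "(p / c) powr l * exp_mart (l * \<sigma>) s \<omega> \<le> exp (- r * s)"
    unfolding discounted_gbm_powr[OF p c(1) l(1), symmetric] by (simp add: mult_left_le)
  then show ?thesis using p c by (simp add: powr_divide field_simps)
qed

text \<open>For \<open>l < 0\<close> the exponential martingale of \<open>l \<sigma> B\<close> stays bounded before the first passage
  below \<open>c\<close> and decays afterwards, so optional stopping holds with equality.\<close>
lemma nn_integral_stopped_exp_mart_first_passage:
  assumes r: "r > 0" and p: "p > 0" and c: "0 < c" "c \<le> p"
    and l: "r - \<mu> * l - 1/2 * \<sigma>\<^sup>2 * l * (l - 1) = 0" "l < 0"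
  shows "(\<integral>\<^sup>+\<omega>. ennreal (stopped_value (exp_mart (l * \<sigma>))
      (\<lambda>\<omega>. first_passage_below (\<lambda>t. gbm p \<mu> \<sigma> B t \<omega>) c) \<omega>) \<partial>M) = 1"
proof (rule nn_integral_stopped_exp_mart_eq_1[OF first_passage_gbm_stopping_time])
  note bound = exp_mart_before_first_passage[OF p c l]
  show "exp_mart (l * \<sigma>) s \<omega> \<le> (c / p) powr l"
    if "\<omega> \<in> space M" "0 \<le> s" "ereal s \<le> first_passage_below (\<lambda>t. gbm p \<mu> \<sigma> B t \<omega>) c" for \<omega> s
    using bound[OF that] mult_left_le_one_le[of "(c / p) powr l" "exp (- r * s)"] r that(2)
    by (simp add: mult_nonneg_nonneg)
  show "(\<lambda>n. exp_mart (l * \<sigma>) (real n) \<omega>) \<longlonglongrightarrow> 0"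
    if "\<omega> \<in> space M" "first_passage_below (\<lambda>t. gbm p \<mu> \<sigma> B t \<omega>) c = \<infinity>" for \<omega>
  proof (rule tendsto_sandwich[where f="\<lambda>_. 0" and h="\<lambda>n. exp (- r * real n) * (c / p) powr l"])
    have "(\<lambda>n. exp (- r) ^ n * (c / p) powr l) \<longlonglongrightarrow> 0 * (c / p) powr l"
      using r by (intro tendsto_mult LIMSEQ_realpow_zero tendsto_const) auto
    then show "(\<lambda>n. exp (- r * real n) * (c / p) powr l) \<longlonglongrightarrow> 0"
      by (simp add: exp_of_nat_mult[symmetric] mult.commute)
  qed (use bound[OF that(1)] that(2) in \<open>auto intro!: always_eventually less_imp_le[OF exp_mart_pos]\<close>)
qed

lemma first_passage_gbm_discount:
  assumes r: "r > 0" and p: "p > 0" and c: "0 < c" "c \<le> p"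
    and l: "r - \<mu> * l - 1/2 * \<sigma>\<^sup>2 * l * (l - 1) = 0" "l < 0"
  defines "\<tau> \<equiv> \<lambda>\<omega>. first_passage_below (\<lambda>t. gbm p \<mu> \<sigma> B t \<omega>) c"
  shows "(\<integral>\<omega>. stopped_value (\<lambda>t _. exp (- r * t)) \<tau> \<omega> \<partial>M) = (p / c) powr l"
    and "(\<integral>\<omega>. stopped_value (\<lambda>t \<omega>. exp (- r * t) * gbm p \<mu> \<sigma> B t \<omega>) \<tau> \<omega> \<partial>M) = c * (p / c) powr l"
proof -
  let ?D = "stopped_value (\<lambda>t _. exp (- r * t)) \<tau>"
  have st: "is_stopping_time F \<tau>" unfolding \<tau>_def by (rule first_passage_gbm_stopping_time)
  have at: "gbm p \<mu> \<sigma> B x \<omega> = c" if "\<omega> \<in> space M" "\<tau> \<omega> = ereal x" for \<omega> x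
    using gbm_first_passage(1)[OF that(1) c(2)] that(2) unfolding \<tau>_def by simp
  have "stopped_value (exp_mart (l * \<sigma>)) \<tau> \<omega> = (c / p) powr l * ?D \<omega>" if "\<omega> \<in> space M" for \<omega>
    using discounted_gbm_powr[OF p c(1) l(1), of "real_of_ereal (\<tau> \<omega>)" \<omega>] at[OF that]
      p c stopping_time_nonneg[OF st, of \<omega>]
    by (cases "\<tau> \<omega>") (auto simp: stopped_value_def powr_divide field_simps)
  then have "(\<integral>\<^sup>+\<omega>. ennreal ((c / p) powr l * ?D \<omega>) \<partial>M) = 1"
    using nn_integral_stopped_exp_mart_first_passage[OF r p c l] unfolding \<tau>_def[symmetric]
    by (metis (no_types, lifting) nn_integral_cong)
  moreover have "?D \<in> borel_measurable M" by (rule measurable_stopped_value[OF st]) simp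
  moreover have "0 \<le> ?D \<omega>" for \<omega> by (simp add: stopped_value_def)
  ultimately have "integral\<^sup>L M (\<lambda>\<omega>. (c / p) powr l * ?D \<omega>) = 1"
    using nn_integral_eq_integrable[of "\<lambda>\<omega>. (c / p) powr l * ?D \<omega>" M 1] by simp
  then show D: "integral\<^sup>L M ?D = (p / c) powr l"
    using p c by (simp add: powr_divide field_simps)
  have "stopped_value (\<lambda>t \<omega>. exp (- r * t) * gbm p \<mu> \<sigma> B t \<omega>) \<tau> \<omega> = c * ?D \<omega>" if "\<omega> \<in> space M" for \<omega>
    using at[OF that] stopping_time_nonneg[OF st, of \<omega>] by (cases "\<tau> \<omega>") (auto simp: stopped_value_def)
  then have "(\<integral>\<omega>. stopped_value (\<lambda>t \<omega>. exp (- r * t) * gbm p \<mu> \<sigma> B t \<omega>) \<tau> \<omega> \<partial>M)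
      = (\<integral>\<omega>. c * ?D \<omega> \<partial>M)"
    by (intro Bochner_Integration.integral_cong) auto
  then show "(\<integral>\<omega>. stopped_value (\<lambda>t \<omega>. exp (- r * t) * gbm p \<mu> \<sigma> B t \<omega>) \<tau> \<omega> \<partial>M) = c * (p / c) powr l"
    using D by simp
qed

end

section \<open>Optimal stopping\<close>

lemma value_G_eq_stop_reward:
  assumes "is_stopping_time F \<tau>\<^sub>0"
    and "\<forall>\<tau>. is_stopping_time F \<tau> \<longrightarrow> stop_reward M r C l1 l0 P \<tau> \<le> stop_reward M r C l1 l0 P \<tau>\<^sub>0"
  shows "value_G M F r C l1 l0 P = stop_reward M r C l1 l0 P \<tau>\<^sub>0"
  unfolding value_G_def by (rule cSup_eq_maximum) (use assms in auto)

definition is_optimal_stopping ::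
    "'a measure \<Rightarrow> (real \<Rightarrow> 'a measure) \<Rightarrow> real \<Rightarrow> real \<Rightarrow> real \<Rightarrow> real \<Rightarrow> (real \<Rightarrow> 'a \<Rightarrow> real)
      \<Rightarrow> ('a \<Rightarrow> ereal) \<Rightarrow> real \<Rightarrow> bool" where
  "is_optimal_stopping M F r C l1 l0 P \<tau>\<^sub>0 v \<longleftrightarrow>
     is_stopping_time F \<tau>\<^sub>0 \<and>
     (\<forall>\<tau>. is_stopping_time F \<tau> \<longrightarrow> stop_reward M r C l1 l0 P \<tau> \<le> stop_reward M r C l1 l0 P \<tau>\<^sub>0) \<and>
     stop_reward M r C l1 l0 P \<tau>\<^sub>0 = v \<and> value_G M F r C l1 l0 P = v"

lemma is_optimal_stoppingI:
  assumes "is_stopping_time F \<tau>\<^sub>0" "stop_reward M r C l1 l0 P \<tau>\<^sub>0 = v"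
    and "\<And>\<tau>. is_stopping_time F \<tau> \<Longrightarrow> stop_reward M r C l1 l0 P \<tau> \<le> v"
  shows "is_optimal_stopping M F r C l1 l0 P \<tau>\<^sub>0 v"
  using assms value_G_eq_stop_reward[of F \<tau>\<^sub>0 M r C l1 l0 P] unfolding is_optimal_stopping_def by auto

context brownian_filtration
begin

text \<open>For roots \<open>l\<close> of the characteristic equation, \<open>exp (- r * t) * (P t / q) powr l\<close> is a multiple of an
  exponential martingale, so a majorant built from such powers bounds
  the expected discounted payoff of every stopping time.\<close>
lemma discounted_payoff_le_harmonic_majorant:
  assumes rm: "r > \<mu>" and r: "r > 0" and p: "p > 0" and q: "q > 0" and st: "is_stopping_time F \<tau>"
    and l1: "r - \<mu> * l1 - 1/2 * \<sigma>\<^sup>2 * l1 * (l1 - 1) = 0"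
    and l2: "r - \<mu> * l2 - 1/2 * \<sigma>\<^sup>2 * l2 * (l2 - 1) = 0"
    and A: "A1 \<ge> 0" "A2 \<ge> 0"
    and major: "\<And>X. X > 0 \<Longrightarrow> c0 - c1 * X \<le> A1 * (X / q) powr l1 + A2 * (X / q) powr l2"
  shows "c0 * (\<integral>\<omega>. stopped_value (\<lambda>t _. exp (- r * t)) \<tau> \<omega> \<partial>M)
      - c1 * (\<integral>\<omega>. stopped_value (\<lambda>t \<omega>. exp (- r * t) * gbm p \<mu> \<sigma> B t \<omega>) \<tau> \<omega> \<partial>M)
    \<le> A1 * (p / q) powr l1 + A2 * (p / q) powr l2"
proof -
  let ?D = "stopped_value (\<lambda>t _. exp (- r * t)) \<tau>"
    and ?Q = "stopped_value (\<lambda>t \<omega>. exp (- r * t) * gbm p \<mu> \<sigma> B t \<omega>) \<tau>"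
    and ?E1 = "stopped_value (exp_mart (l1 * \<sigma>)) \<tau>" and ?E2 = "stopped_value (exp_mart (l2 * \<sigma>)) \<tau>"
  let ?a1 = "A1 * (p / q) powr l1" and ?a2 = "A2 * (p / q) powr l2"
  note iD = integrable_stopped_discount[OF st less_imp_le[OF r]]
    and iQ = integrable_stopped_discounted_gbm[OF st rm p]
    and i1 = integrable_stopped_exp_mart[OF st, of "l1 * \<sigma>"]
    and i2 = integrable_stopped_exp_mart[OF st, of "l2 * \<sigma>"]
  have "c0 * integral\<^sup>L M ?D - c1 * integral\<^sup>L M ?Q = integral\<^sup>L M (\<lambda>\<omega>. c0 * ?D \<omega> - c1 * ?Q \<omega>)"
    using iD iQ by simp
  also have "\<dots> \<le> integral\<^sup>L M (\<lambda>\<omega>. ?a1 * ?E1 \<omega> + ?a2 * ?E2 \<omega>)"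
  proof (rule integral_mono)
    fix \<omega> assume \<omega>: "\<omega> \<in> space M"
    show "c0 * ?D \<omega> - c1 * ?Q \<omega> \<le> ?a1 * ?E1 \<omega> + ?a2 * ?E2 \<omega>"
    proof (cases "\<tau> \<omega> = \<infinity>")
      case False
      let ?x = "real_of_ereal (\<tau> \<omega>)" and ?X = "gbm p \<mu> \<sigma> B (real_of_ereal (\<tau> \<omega>)) \<omega>"
      have "c0 * ?D \<omega> - c1 * ?Q \<omega> = exp (- r * ?x) * (c0 - c1 * ?X)"
        using False by (simp add: stopped_value_def algebra_simps)
      also have "\<dots> \<le> exp (- r * ?x) * (A1 * (?X / q) powr l1 + A2 * (?X / q) powr l2)"
        using major[OF gbm_pos[OF p]] by (intro mult_left_mono) auto
      also have "\<dots> = A1 * (exp (- r * ?x) * (?X / q) powr l1) + A2 * (exp (- r * ?x) * (?X / q) powr l2)"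
        by (simp add: algebra_simps)
      also have "\<dots> = ?a1 * ?E1 \<omega> + ?a2 * ?E2 \<omega>"
        using False discounted_gbm_powr[OF p q l1, of ?x \<omega>] discounted_gbm_powr[OF p q l2, of ?x \<omega>]
        by (simp add: stopped_value_def)
      finally show ?thesis .
    qed (simp add: stopped_value_def)
  qed (use iD iQ i1 i2 in auto)
  also have "\<dots> = ?a1 * integral\<^sup>L M ?E1 + ?a2 * integral\<^sup>L M ?E2" using i1 i2 by simp
  also have "\<dots> \<le> ?a1 * 1 + ?a2 * 1"
    using i1 i2 A by (intro add_mono mult_left_mono) auto
  finally show ?thesis by simp
qed

lemma never_stopping_optimal:
  assumes rm: "r > \<mu>" and r: "r > 0" and p: "p > 0"
    and c1: "0 \<le> 1 / (r - \<mu>) + l1" and c0: "C / r - l0 \<le> 0"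
  shows "is_optimal_stopping M F r C l1 l0 (gbm p \<mu> \<sigma> B) (\<lambda>_. \<infinity>) (p / (r - \<mu>) - C / r)"
proof (rule is_optimal_stoppingI)
  show "is_stopping_time F (\<lambda>_. \<infinity>)" by (rule stopping_time_const) simp
  then show "stop_reward M r C l1 l0 (gbm p \<mu> \<sigma> B) (\<lambda>_. \<infinity>) = p / (r - \<mu>) - C / r"
    using stop_reward_gbm[OF rm r p] by (simp add: stopped_value_def)
  fix \<tau> assume st: "is_stopping_time F \<tau>"
  have "0 \<le> (\<integral>\<omega>. stopped_value (\<lambda>t \<omega>. exp (- r * t) * gbm p \<mu> \<sigma> B t \<omega>) \<tau> \<omega> \<partial>M)"
    using gbm_pos[OF p] by (intro integral_nonneg_AE) (auto simp: stopped_value_def less_imp_le)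
  moreover have "0 \<le> (\<integral>\<omega>. stopped_value (\<lambda>t _. exp (- r * t)) \<tau> \<omega> \<partial>M)"
    by (intro integral_nonneg_AE) (auto simp: stopped_value_def)
  ultimately show "stop_reward M r C l1 l0 (gbm p \<mu> \<sigma> B) \<tau> \<le> p / (r - \<mu>) - C / r"
    unfolding stop_reward_gbm[OF rm r p st] using c0 c1
    by (smt (verit) mult_nonneg_nonneg mult_nonpos_nonneg)
qed

lemma discounted_payoff_first_passage:
  assumes r: "r > 0" and p: "p > 0"
    and lam1: "r - \<mu> * lam1 - 1/2 * \<sigma>\<^sup>2 * lam1 * (lam1 - 1) = 0" "lam1 < 0"
    and c1: "0 < c1" and c0: "0 < c0" and q: "q = lam1 / (lam1 - 1) * (c0 / c1)"
  defines "\<tau>\<^sub>q \<equiv> \<lambda>\<omega>. first_passage_below (\<lambda>t. gbm p \<mu> \<sigma> B t \<omega>) q"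
  shows "c0 * (\<integral>\<omega>. stopped_value (\<lambda>t _. exp (- r * t)) \<tau>\<^sub>q \<omega> \<partial>M)
      - c1 * (\<integral>\<omega>. stopped_value (\<lambda>t \<omega>. exp (- r * t) * gbm p \<mu> \<sigma> B t \<omega>) \<tau>\<^sub>q \<omega> \<partial>M)
    = (if q < p then (c0 - c1 * q) * (p / q) powr lam1 else c0 - c1 * p)"
proof (cases "p < q")
  case True
  then have "\<tau>\<^sub>q \<omega> = 0" if "\<omega> \<in> space M" for \<omega>
    using first_passage_below_eq_0[OF continuous_gbm[OF that]] gbm_0[OF that] by (simp add: \<tau>\<^sub>q_def)
  then have "(\<integral>\<omega>. stopped_value (\<lambda>t _. exp (- r * t)) \<tau>\<^sub>q \<omega> \<partial>M) = (\<integral>\<omega>. 1 \<partial>M)"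
    and "(\<integral>\<omega>. stopped_value (\<lambda>t \<omega>. exp (- r * t) * gbm p \<mu> \<sigma> B t \<omega>) \<tau>\<^sub>q \<omega> \<partial>M) = (\<integral>\<omega>. p \<partial>M)"
    by (intro Bochner_Integration.integral_cong; simp add: stopped_value_def gbm_0)+
  then show ?thesis using True by (simp add: prob_space)
next
  case False
  have "q > 0" by (rule linear_le_powr_at_threshold(1)[OF c1 c0 lam1(2) q])
  then show ?thesis
    using False first_passage_gbm_discount[OF r p \<open>q > 0\<close> _ lam1] unfolding \<tau>\<^sub>q_def
    by (cases "q = p") (simp_all add: algebra_simps)
qed

lemma discounted_payoff_le_threshold_value:
  assumes rm: "r > \<mu>" and r: "r > 0" and p: "p > 0" and st: "is_stopping_time F \<tau>"
    and lam1: "r - \<mu> * lam1 - 1/2 * \<sigma>\<^sup>2 * lam1 * (lam1 - 1) = 0" "lam1 < 0"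
    and lam2: "r - \<mu> * lam2 - 1/2 * \<sigma>\<^sup>2 * lam2 * (lam2 - 1) = 0" "1 < lam2"
    and c1: "0 < c1" and c0: "0 < c0" and q: "q = lam1 / (lam1 - 1) * (c0 / c1)"
  shows "c0 * (\<integral>\<omega>. stopped_value (\<lambda>t _. exp (- r * t)) \<tau> \<omega> \<partial>M)
      - c1 * (\<integral>\<omega>. stopped_value (\<lambda>t \<omega>. exp (- r * t) * gbm p \<mu> \<sigma> B t \<omega>) \<tau> \<omega> \<partial>M)
    \<le> (if q < p then (c0 - c1 * q) * (p / q) powr lam1 else c0 - c1 * p)"
proof (cases "q < p")
  case True
  note threshold = linear_le_powr_at_threshold[OF c1 c0 lam1(2) q]
  show ?thesis
    using discounted_payoff_le_harmonic_majorant[OF rm r p threshold(1) st lam1(1) lam2(1), of "c0 - c1 * q" 0]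
      threshold True by simp
next
  case False
  obtain A1 A2 where A: "A1 \<ge> 0" "A2 \<ge> 0" "A1 + A2 = c0 - c1 * p"
    and major: "\<And>X. X > 0 \<Longrightarrow> c0 - c1 * X \<le> A1 * (X / p) powr lam1 + A2 * (X / p) powr lam2"
    using powr_majorant_below_threshold[OF c1 c0 lam1(2) lam2(2) p q] False by auto
  show ?thesis
    using discounted_payoff_le_harmonic_majorant[OF rm r p p st lam1(1) lam2(1) A(1,2) major] False A(3) p
    by simp
qed

lemma threshold_stopping_optimal:
  fixes C l0 l1 q :: real
  assumes rm: "r > \<mu>" and r: "r > 0" and p: "p > 0"
    and lam1: "r - \<mu> * lam1 - 1/2 * \<sigma>\<^sup>2 * lam1 * (lam1 - 1) = 0" "lam1 < 0"
    and lam2: "r - \<mu> * lam2 - 1/2 * \<sigma>\<^sup>2 * lam2 * (lam2 - 1) = 0" "1 < lam2"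
  defines "c1 \<equiv> 1 / (r - \<mu>) + l1" and "c0 \<equiv> C / r - l0"
  assumes c1: "0 < c1" and c0: "0 < c0" and q: "q = lam1 / (lam1 - 1) * (c0 / c1)"
  shows "is_optimal_stopping M F r C l1 l0 (gbm p \<mu> \<sigma> B)
    (\<lambda>\<omega>. first_passage_below (\<lambda>t. gbm p \<mu> \<sigma> B t \<omega>) q)
    (p / (r - \<mu>) - C / r + (if q < p then (c0 - c1 * q) * (p / q) powr lam1 else c0 - c1 * p))"
proof (rule is_optimal_stoppingI)
  have reward: "stop_reward M r C l1 l0 (gbm p \<mu> \<sigma> B) \<tau> = p / (r - \<mu>) - C / r
      + (c0 * (\<integral>\<omega>. stopped_value (\<lambda>t _. exp (- r * t)) \<tau> \<omega> \<partial>M)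
         - c1 * (\<integral>\<omega>. stopped_value (\<lambda>t \<omega>. exp (- r * t) * gbm p \<mu> \<sigma> B t \<omega>) \<tau> \<omega> \<partial>M))"
    if "is_stopping_time F \<tau>" for \<tau>
    unfolding stop_reward_gbm[OF rm r p that] c0_def c1_def by simp
  show st_q: "is_stopping_time F (\<lambda>\<omega>. first_passage_below (\<lambda>t. gbm p \<mu> \<sigma> B t \<omega>) q)"
    by (rule first_passage_gbm_stopping_time)
  show "stop_reward M r C l1 l0 (gbm p \<mu> \<sigma> B) (\<lambda>\<omega>. first_passage_below (\<lambda>t. gbm p \<mu> \<sigma> B t \<omega>) q)
      = p / (r - \<mu>) - C / r + (if q < p then (c0 - c1 * q) * (p / q) powr lam1 else c0 - c1 * p)"
    unfolding reward[OF st_q] discounted_payoff_first_passage[OF r p lam1 c1 c0 q] ..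
  show "stop_reward M r C l1 l0 (gbm p \<mu> \<sigma> B) \<tau>
      \<le> p / (r - \<mu>) - C / r + (if q < p then (c0 - c1 * q) * (p / q) powr lam1 else c0 - c1 * p)"
    if "is_stopping_time F \<tau>" for \<tau>
    unfolding reward[OF that] using discounted_payoff_le_threshold_value[OF rm r p that lam1 lam2 c1 c0 q]
    by simp
qed

end

lemma reward_coefficients:
  fixes r \<mu> \<delta> C K_O l0 l1 :: real
  assumes rm: "r > \<mu>" and r: "r > 0"
    and l1: "l1 = - (exp ((\<mu> - r) * \<delta>) - 1) / (\<mu> - r)"
    and l0: "l0 = - C / r * (exp (- r * \<delta>) - 1) + exp (- r * \<delta>) * K_O"
  shows "1 / (r - \<mu>) + l1 = exp ((\<mu> - r) * \<delta>) / (r - \<mu>)"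
    and "C / r - l0 = exp (- r * \<delta>) * (C / r - K_O)"
    and "p / (\<mu> - r) * (exp ((\<mu> - r) * \<delta>) - 1) + C / r * (exp (- r * \<delta>) - 1) - exp (- r * \<delta>) * K_O
      = p / (r - \<mu>) - C / r + ((C / r - l0) - (1 / (r - \<mu>) + l1) * p)"
    and "0 < 1 / (r - \<mu>) + l1"
    and "C \<le> r * K_O \<Longrightarrow> C / r - l0 \<le> 0"
proof -
  show c1: "1 / (r - \<mu>) + l1 = exp ((\<mu> - r) * \<delta>) / (r - \<mu>)"
    using rm unfolding l1 by (simp add: field_simps)
  then show "0 < 1 / (r - \<mu>) + l1" using rm by simp
  show c0: "C / r - l0 = exp (- r * \<delta>) * (C / r - K_O)"
    unfolding l0 by (simp add: algebra_simps)
  show "C / r - l0 \<le> 0" if "C \<le> r * K_O"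
  proof -
    have "C / r - K_O \<le> 0" using that r by (simp add: divide_le_eq mult.commute)
    then show ?thesis unfolding c0 by (simp add: mult_nonneg_nonpos)
  qed
  have "p / (\<mu> - r) * (exp ((\<mu> - r) * \<delta>) - 1) = - l1 * p"
    using rm unfolding l1 by (simp add: field_simps)
  moreover have "C / r * (exp (- r * \<delta>) - 1) - exp (- r * \<delta>) * K_O = - l0"
    unfolding l0 by (simp add: algebra_simps)
  ultimately show "p / (\<mu> - r) * (exp ((\<mu> - r) * \<delta>) - 1) + C / r * (exp (- r * \<delta>) - 1)
      - exp (- r * \<delta>) * K_O = p / (r - \<mu>) - C / r + ((C / r - l0) - (1 / (r - \<mu>) + l1) * p)"
    by (simp add: algebra_simps)
qed

lemma threshold_constants:
  fixes r \<mu> \<delta> C K_O lam1 :: real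
  assumes rm: "r > \<mu>" and r: "r > 0" and CK: "C > r * K_O" and lam1: "lam1 < 0"
  defines "c1 \<equiv> exp ((\<mu> - r) * \<delta>) / (r - \<mu>)" and "c0 \<equiv> exp (- r * \<delta>) * (C / r - K_O)"
    and "p_O \<equiv> exp (- \<mu> * \<delta>) * (lam1 / (lam1 - 1)) * (r - \<mu>) * (C / r - K_O)"
  shows "0 < c1" and "0 < c0" and "p_O = lam1 / (lam1 - 1) * (c0 / c1)"
    and "p > 0 \<Longrightarrow> exp ((\<mu> - r) * \<delta>) * p_O powr (1 - lam1) / (lam1 * (\<mu> - r)) * p powr lam1
      = (c0 - c1 * p_O) * (p / p_O) powr lam1"
proof -
  show c1: "0 < c1" using rm by (simp add: c1_def)
  have "0 < C / r - K_O" using CK r by (simp add: less_divide_eq mult.commute)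
  then show c0: "0 < c0" by (simp add: c0_def)
  have "exp (- r * \<delta>) = exp (- \<mu> * \<delta>) * exp ((\<mu> - r) * \<delta>)"
    by (simp add: exp_add[symmetric] algebra_simps)
  then have "c0 / c1 = exp (- \<mu> * \<delta>) * (r - \<mu>) * (C / r - K_O)"
    using rm unfolding c0_def c1_def by (simp add: field_simps)
  then show p_O: "p_O = lam1 / (lam1 - 1) * (c0 / c1)" unfolding p_O_def by simp
  note threshold = linear_le_powr_at_threshold[OF c1 c0 lam1 p_O]
  assume p: "p > 0"
  have "c0 - c1 * p_O = exp ((\<mu> - r) * \<delta>) * p_O / (lam1 * (\<mu> - r))"
    using threshold(3) lam1 rm unfolding c1_def by (simp add: field_simps)
  then show "exp ((\<mu> - r) * \<delta>) * p_O powr (1 - lam1) / (lam1 * (\<mu> - r)) * p powr lam1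
      = (c0 - c1 * p_O) * (p / p_O) powr lam1"
    using p threshold(1) by (simp add: powr_diff powr_divide field_simps)
qed

theorem theorem5p3:
  fixes M :: "'a measure" and F :: "real \<Rightarrow> 'a measure" and B :: "real \<Rightarrow> 'a \<Rightarrow> real"
    and \<mu> \<sigma> r C K_O \<delta> l1 l0 lam1 lam2 :: real
  assumes "prob_space M"
    and "usual_filtration M F" and "trivial_F0 M F"
    and "std_brownian_motion M F B"
    and "\<sigma> > 0" and "r > 0" and "\<delta> \<ge> 0"
    and "r > \<mu>"
    and l1_def: "l1 = - (exp ((\<mu> - r) * \<delta>) - 1) / (\<mu> - r)"
    and l0_def: "l0 = - C / r * (exp (- r * \<delta>) - 1) + exp (- r * \<delta>) * K_O"
    and "r - \<mu> * lam1 - 1/2 * \<sigma>\<^sup>2 * lam1 * (lam1 - 1) = 0"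
    and "r - \<mu> * lam2 - 1/2 * \<sigma>\<^sup>2 * lam2 * (lam2 - 1) = 0"
    and "lam1 < lam2"
  shows
    "(C \<le> r * K_O \<longrightarrow>
       (\<forall>p>0.
          let P = gbm p \<mu> \<sigma> B; \<tau>s = (\<lambda>\<omega>. \<infinity>) in
          is_stopping_time F \<tau>s \<and>
          (\<forall>\<tau>. is_stopping_time F \<tau> \<longrightarrow> stop_reward M r C l1 l0 P \<tau> \<le> stop_reward M r C l1 l0 P \<tau>s) \<and>
          stop_reward M r C l1 l0 P \<tau>s = p / (r - \<mu>) - C / r \<and>
          value_G M F r C l1 l0 P = p / (r - \<mu>) - C / r))
     \<and>
     (C > r * K_O \<longrightarrow>
       (let p_O = exp (- \<mu> * \<delta>) * (lam1 / (lam1 - 1)) * (r - \<mu>) * (C / r - K_O);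
            A = exp ((\<mu> - r) * \<delta>) * p_O powr (1 - lam1) / (lam1 * (\<mu> - r)) in
        \<forall>p>0.
          let P = gbm p \<mu> \<sigma> B;
              \<tau>s = (\<lambda>\<omega>. Inf {ereal t | t. t > 0 \<and> P t \<omega> \<le> p_O});
              g = (if p > p_O then A * p powr lam1 + p / (r - \<mu>) - C / r
                   else p / (\<mu> - r) * (exp ((\<mu> - r) * \<delta>) - 1) + C / r * (exp (- r * \<delta>) - 1)
                        - exp (- r * \<delta>) * K_O) in
          is_stopping_time F \<tau>s \<and>
          (\<forall>\<tau>. is_stopping_time F \<tau> \<longrightarrow> stop_reward M r C l1 l0 P \<tau> \<le> stop_reward M r C l1 l0 P \<tau>s) \<and>
          stop_reward M r C l1 l0 P \<tau>s = g \<and>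
          value_G M F r C l1 l0 P = g))"
proof -
  interpret brownian_filtration M F B
    using assms(1,2,4) by (simp add: brownian_filtration_def brownian_filtration_axioms_def)
  have rm: "r > \<mu>" and r: "r > 0" using assms by auto
  have lam: "lam1 < 0" "1 < lam2" using characteristic_roots_sign assms(5-8,11-13) by blast+
  note coeff = reward_coefficients[OF rm r l1_def l0_def]
  have never: "is_optimal_stopping M F r C l1 l0 (gbm p \<mu> \<sigma> B) (\<lambda>_. \<infinity>) (p / (r - \<mu>) - C / r)"
    if "C \<le> r * K_O" "p > 0" for p
    using never_stopping_optimal[OF rm r that(2) less_imp_le[OF coeff(4)] coeff(5)[OF that(1)]] .
  define p_O where "p_O = exp (- \<mu> * \<delta>) * (lam1 / (lam1 - 1)) * (r - \<mu>) * (C / r - K_O)"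
  have threshold: "is_optimal_stopping M F r C l1 l0 (gbm p \<mu> \<sigma> B)
      (\<lambda>\<omega>. first_passage_below (\<lambda>t. gbm p \<mu> \<sigma> B t \<omega>) p_O)
      (if p > p_O then exp ((\<mu> - r) * \<delta>) * p_O powr (1 - lam1) / (lam1 * (\<mu> - r)) * p powr lam1
         + p / (r - \<mu>) - C / r
       else p / (\<mu> - r) * (exp ((\<mu> - r) * \<delta>) - 1) + C / r * (exp (- r * \<delta>) - 1) - exp (- r * \<delta>) * K_O)"
    if "C > r * K_O" "p > 0" for p
  proof -
    note k = threshold_constants[where \<delta>=\<delta>, OF rm r that(1) lam(1), folded coeff(1,2) p_O_def]
    show ?thesis
      unfolding k(4)[OF that(2)] coeff(3)
      using threshold_stopping_optimal[OF rm r that(2) assms(11) lam(1) assms(12) lam(2) k(1-3)]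
      by (auto simp: algebra_simps)
  qed
  show ?thesis
    unfolding Let_def p_O_def[symmetric] is_optimal_stopping_def[symmetric]
    using never threshold[unfolded first_passage_below_def] by blast
qed

end
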